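(* Let $(L,F,R)$ be an adjoint triple of covariant functors $F:\mathcal{A}\to \mathcal{B}$ and $L,R:\mathcal{B}\to \mathcal{A}$ between abelian categories (that is, $L$ is left adjoint to $F$ and $R$ is right adjoint to $F$). (1) Let $M,N$ be objects of $\mathcal{A}$ and assume $F$ is fully faithful. Then $N$ is strongly $M$-Rickart in $\mathcal{A}$ if and only if $F(N)$ is strongly $F(M)$-Rickart in $\mathcal{B}$; and $N$ is dual strongly $M$-Rickart in $\mathcal{A}$ if and only if $F(N)$ is dual strongly $F(M)$-Rickart in $\mathcal{B}$. (2) Let $M,N$ be objects of $\mathcal{B}$ and assume $L$ (or $R$) is fully faithful. Then (i) $N$ is strongly $M$-Rickart in $\mathcal{B}$ if and only if $R(N)$ is strongly $R(M)$-Rickart in $\mathcal{A}$; (ii) $N$ is dual strongly $M$-Rickart in $\mathcal{B}$ if and only if $L(N)$ is dual strongly $L(M)$-Rickart in $\mathcal{A}$.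
   Context: A morphism $f:X\to Y$ is a section if $f'f=1_X$ for some $f'$, a retraction if $ff'=1_Y$ for some $f'$. A monomorphism $k:K\to X$ is fully invariant if for every $h:X\to X$ there is $\alpha:K\to K$ with $hk=k\alpha$; an epimorphism $c:X\to C$ is fully coinvariant if for every $h:X\to X$ there is $\gamma:C\to C$ with $ch=\gamma c$. For objects $M,N$: $N$ is strongly $M$-Rickart if the kernel of every morphism $f:M\to N$ is a fully invariant section; $N$ is dual strongly $M$-Rickart if the cokernel of every morphism $f:M\to N$ is a fully coinvariant retraction. *)

theory Defs
  imports Main
begin

text \<open>Categories given explicitly: objects, arrows, domain, codomain,
  composition (Cmp C g f = g after f, defined when Cod f = Dom g) and identities.\<close>

record ('o, 'm) cat =
  Obj :: "'o set"
  Arr :: "'m set"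
  Dom :: "'m \<Rightarrow> 'o"
  Cod :: "'m \<Rightarrow> 'o"
  Cmp :: "'m \<Rightarrow> 'm \<Rightarrow> 'm"
  Idm :: "'o \<Rightarrow> 'm"

definition hom :: "('o, 'm) cat \<Rightarrow> 'o \<Rightarrow> 'o \<Rightarrow> 'm set" where
  "hom C X Y = {f \<in> Arr C. Dom C f = X \<and> Cod C f = Y}"

definition category :: "('o, 'm) cat \<Rightarrow> bool" where
  "category C \<longleftrightarrow>
     (\<forall>f\<in>Arr C. Dom C f \<in> Obj C \<and> Cod C f \<in> Obj C) \<and>
     (\<forall>X\<in>Obj C. Idm C X \<in> hom C X X) \<and>
     (\<forall>f\<in>Arr C. \<forall>g\<in>Arr C. Cod C f = Dom C g \<longrightarrow>
        Cmp C g f \<in> hom C (Dom C f) (Cod C g)) \<and>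
     (\<forall>f\<in>Arr C. Cmp C f (Idm C (Dom C f)) = f \<and> Cmp C (Idm C (Cod C f)) f = f) \<and>
     (\<forall>f\<in>Arr C. \<forall>g\<in>Arr C. \<forall>h\<in>Arr C. Cod C f = Dom C g \<and> Cod C g = Dom C h \<longrightarrow>
        Cmp C h (Cmp C g f) = Cmp C (Cmp C h g) f)"

definition mono :: "('o, 'm) cat \<Rightarrow> 'm \<Rightarrow> bool" where
  "mono C m \<longleftrightarrow> m \<in> Arr C \<and>
     (\<forall>g\<in>Arr C. \<forall>h\<in>Arr C. Cod C g = Dom C m \<and> Cod C h = Dom C m \<and> Dom C g = Dom C h
        \<and> Cmp C m g = Cmp C m h \<longrightarrow> g = h)"

definition epi :: "('o, 'm) cat \<Rightarrow> 'm \<Rightarrow> bool" where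
  "epi C e \<longleftrightarrow> e \<in> Arr C \<and>
     (\<forall>g\<in>Arr C. \<forall>h\<in>Arr C. Dom C g = Cod C e \<and> Dom C h = Cod C e \<and> Cod C g = Cod C h
        \<and> Cmp C g e = Cmp C h e \<longrightarrow> g = h)"

definition zero_object :: "('o, 'm) cat \<Rightarrow> 'o \<Rightarrow> bool" where
  "zero_object C Z \<longleftrightarrow> Z \<in> Obj C \<and>
     (\<forall>X\<in>Obj C. (\<exists>!f. f \<in> hom C X Z) \<and> (\<exists>!f. f \<in> hom C Z X))"

definition zero_arrow :: "('o, 'm) cat \<Rightarrow> 'm \<Rightarrow> bool" where
  "zero_arrow C z \<longleftrightarrow> z \<in> Arr C \<and>
     (\<exists>Z a b. zero_object C Z \<and> a \<in> hom C (Dom C z) Z \<and> b \<in> hom C Z (Cod C z)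
        \<and> z = Cmp C b a)"

definition is_kernel :: "('o, 'm) cat \<Rightarrow> 'm \<Rightarrow> 'm \<Rightarrow> bool" where
  "is_kernel C f k \<longleftrightarrow> f \<in> Arr C \<and> k \<in> Arr C \<and> Cod C k = Dom C f \<and>
     zero_arrow C (Cmp C f k) \<and>
     (\<forall>g\<in>Arr C. Cod C g = Dom C f \<and> zero_arrow C (Cmp C f g) \<longrightarrow>
        (\<exists>!u. u \<in> hom C (Dom C g) (Dom C k) \<and> Cmp C k u = g))"

definition is_cokernel :: "('o, 'm) cat \<Rightarrow> 'm \<Rightarrow> 'm \<Rightarrow> bool" where
  "is_cokernel C f c \<longleftrightarrow> f \<in> Arr C \<and> c \<in> Arr C \<and> Dom C c = Cod C f \<and>
     zero_arrow C (Cmp C c f) \<and>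
     (\<forall>g\<in>Arr C. Dom C g = Cod C f \<and> zero_arrow C (Cmp C g f) \<longrightarrow>
        (\<exists>!u. u \<in> hom C (Cod C c) (Cod C g) \<and> Cmp C u c = g))"

definition is_product :: "('o, 'm) cat \<Rightarrow> 'o \<Rightarrow> 'o \<Rightarrow> 'o \<Rightarrow> 'm \<Rightarrow> 'm \<Rightarrow> bool" where
  "is_product C X Y P p1 p2 \<longleftrightarrow> P \<in> Obj C \<and> p1 \<in> hom C P X \<and> p2 \<in> hom C P Y \<and>
     (\<forall>Q q1 q2. q1 \<in> hom C Q X \<and> q2 \<in> hom C Q Y \<longrightarrow>
        (\<exists>!u. u \<in> hom C Q P \<and> Cmp C p1 u = q1 \<and> Cmp C p2 u = q2))"

definition is_coproduct :: "('o, 'm) cat \<Rightarrow> 'o \<Rightarrow> 'o \<Rightarrow> 'o \<Rightarrow> 'm \<Rightarrow> 'm \<Rightarrow> bool" where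
  "is_coproduct C X Y S i1 i2 \<longleftrightarrow> S \<in> Obj C \<and> i1 \<in> hom C X S \<and> i2 \<in> hom C Y S \<and>
     (\<forall>Q q1 q2. q1 \<in> hom C X Q \<and> q2 \<in> hom C Y Q \<longrightarrow>
        (\<exists>!u. u \<in> hom C S Q \<and> Cmp C u i1 = q1 \<and> Cmp C u i2 = q2))"

text \<open>Abelian category (Freyd's characterization): zero object, binary products and
  coproducts, kernels and cokernels, every mono is a kernel, every epi is a cokernel.\<close>
definition abelian :: "('o, 'm) cat \<Rightarrow> bool" where
  "abelian C \<longleftrightarrow> category C \<and> (\<exists>Z. zero_object C Z) \<and>
     (\<forall>X\<in>Obj C. \<forall>Y\<in>Obj C. \<exists>P p1 p2. is_product C X Y P p1 p2) \<and>
     (\<forall>X\<in>Obj C. \<forall>Y\<in>Obj C. \<exists>S i1 i2. is_coproduct C X Y S i1 i2) \<and>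
     (\<forall>f\<in>Arr C. \<exists>k. is_kernel C f k) \<and>
     (\<forall>f\<in>Arr C. \<exists>c. is_cokernel C f c) \<and>
     (\<forall>m. mono C m \<longrightarrow> (\<exists>f. is_kernel C f m)) \<and>
     (\<forall>e. epi C e \<longrightarrow> (\<exists>f. is_cokernel C f e))"

definition is_functor :: "('a, 'b) cat \<Rightarrow> ('c, 'd) cat \<Rightarrow> ('a \<Rightarrow> 'c) \<Rightarrow> ('b \<Rightarrow> 'd) \<Rightarrow> bool" where
  "is_functor A B F0 F1 \<longleftrightarrow>
     (\<forall>X\<in>Obj A. F0 X \<in> Obj B) \<and>
     (\<forall>f\<in>Arr A. F1 f \<in> hom B (F0 (Dom A f)) (F0 (Cod A f))) \<and>
     (\<forall>X\<in>Obj A. F1 (Idm A X) = Idm B (F0 X)) \<and>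
     (\<forall>f\<in>Arr A. \<forall>g\<in>Arr A. Cod A f = Dom A g \<longrightarrow> F1 (Cmp A g f) = Cmp B (F1 g) (F1 f))"

definition fully_faithful :: "('a, 'b) cat \<Rightarrow> ('c, 'd) cat \<Rightarrow> ('a \<Rightarrow> 'c) \<Rightarrow> ('b \<Rightarrow> 'd) \<Rightarrow> bool" where
  "fully_faithful A B F0 F1 \<longleftrightarrow>
     (\<forall>X\<in>Obj A. \<forall>Y\<in>Obj A. bij_betw F1 (hom A X Y) (hom B (F0 X) (F0 Y)))"

text \<open>adjunction C D L0 L1 G0 G1: the functor L : C \<rightarrow> D is left adjoint to G : D \<rightarrow> C,
  given by a natural unit eta with the universal property (Mac Lane IV.1, Thm 2).\<close>
definition adjunction ::
  "('a, 'b) cat \<Rightarrow> ('c, 'd) cat \<Rightarrow> ('a \<Rightarrow> 'c) \<Rightarrow> ('b \<Rightarrow> 'd) \<Rightarrow> ('c \<Rightarrow> 'a) \<Rightarrow> ('d \<Rightarrow> 'b) \<Rightarrow> bool" where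
  "adjunction C D L0 L1 G0 G1 \<longleftrightarrow> is_functor C D L0 L1 \<and> is_functor D C G0 G1 \<and>
     (\<exists>eta. (\<forall>X\<in>Obj C. eta X \<in> hom C X (G0 (L0 X))) \<and>
        (\<forall>h\<in>Arr C. Cmp C (G1 (L1 h)) (eta (Dom C h)) = Cmp C (eta (Cod C h)) h) \<and>
        (\<forall>X\<in>Obj C. \<forall>Y\<in>Obj D. \<forall>g\<in>hom C X (G0 Y).
           \<exists>!f. f \<in> hom D (L0 X) Y \<and> Cmp C (G1 f) (eta X) = g))"

definition is_section :: "('o, 'm) cat \<Rightarrow> 'm \<Rightarrow> bool" where
  "is_section C f \<longleftrightarrow> f \<in> Arr C \<and>
     (\<exists>f'. f' \<in> hom C (Cod C f) (Dom C f) \<and> Cmp C f' f = Idm C (Dom C f))"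

definition retraction :: "('o, 'm) cat \<Rightarrow> 'm \<Rightarrow> bool" where
  "retraction C f \<longleftrightarrow> f \<in> Arr C \<and>
     (\<exists>f'. f' \<in> hom C (Cod C f) (Dom C f) \<and> Cmp C f f' = Idm C (Cod C f))"

definition fully_invariant :: "('o, 'm) cat \<Rightarrow> 'm \<Rightarrow> bool" where
  "fully_invariant C k \<longleftrightarrow> mono C k \<and>
     (\<forall>h\<in>hom C (Cod C k) (Cod C k). \<exists>\<alpha>\<in>hom C (Dom C k) (Dom C k). Cmp C h k = Cmp C k \<alpha>)"

definition fully_coinvariant :: "('o, 'm) cat \<Rightarrow> 'm \<Rightarrow> bool" where
  "fully_coinvariant C c \<longleftrightarrow> epi C c \<and>
     (\<forall>h\<in>hom C (Dom C c) (Dom C c). \<exists>\<gamma>\<in>hom C (Cod C c) (Cod C c). Cmp C c h = Cmp C \<gamma> c)"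

definition strongly_rickart :: "('o, 'm) cat \<Rightarrow> 'o \<Rightarrow> 'o \<Rightarrow> bool" where
  "strongly_rickart C M N \<longleftrightarrow>
     (\<forall>f\<in>hom C M N. \<forall>k. is_kernel C f k \<longrightarrow> is_section C k \<and> fully_invariant C k)"

definition dual_strongly_rickart :: "('o, 'm) cat \<Rightarrow> 'o \<Rightarrow> 'o \<Rightarrow> bool" where
  "dual_strongly_rickart C M N \<longleftrightarrow>
     (\<forall>f\<in>hom C M N. \<forall>c. is_cokernel C f c \<longrightarrow> retraction C c \<and> fully_coinvariant C c)"

end

theory Submission
  imports Defs
begin

text \<open>
  A fully faithful functor \<open>F\<close> that preserves kernels transports the strongly Rickart
  property in both directions: a kernel \<open>k\<close> is a fully invariant section iff \<open>F k\<close> is one,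
  \<open>F k\<close> is a kernel of \<open>F f\<close>, and any two kernels of a morphism differ by an isomorphism, so
  it does not matter which kernel of \<open>F f\<close> is tested.  Right adjoints preserve kernels and left
  adjoints preserve cokernels; the dual statements follow by passing to opposite categories.
  For an adjoint triple \<open>(L, F, R)\<close>, \<open>L\<close> is fully faithful iff the unit \<open>1 \<rightarrow> F L\<close> is
  invertible and \<open>R\<close> is fully faithful iff the counit \<open>F R \<rightarrow> 1\<close> is.  Transposing along both
  adjunctions turns an inverse of one into an inverse of the other, so \<open>L\<close> is fully faithful
  iff \<open>R\<close> is, and part (2) follows by applying the argument of part (1) to \<open>R\<close> and \<open>L\<close>.
\<close>

lemma categoryD:
  assumes C: "category C"
  shows dom_obj: "f \<in> Arr C \<Longrightarrow> Dom C f \<in> Obj C"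
    and cod_obj: "f \<in> Arr C \<Longrightarrow> Cod C f \<in> Obj C"
    and id_arr: "X \<in> Obj C \<Longrightarrow> Idm C X \<in> Arr C"
    and id_dom: "X \<in> Obj C \<Longrightarrow> Dom C (Idm C X) = X"
    and id_cod: "X \<in> Obj C \<Longrightarrow> Cod C (Idm C X) = X"
    and cmp_arr: "f \<in> Arr C \<Longrightarrow> g \<in> Arr C \<Longrightarrow> Cod C f = Dom C g \<Longrightarrow> Cmp C g f \<in> Arr C"
    and cmp_dom: "f \<in> Arr C \<Longrightarrow> g \<in> Arr C \<Longrightarrow> Cod C f = Dom C g \<Longrightarrow> Dom C (Cmp C g f) = Dom C f"
    and cmp_cod: "f \<in> Arr C \<Longrightarrow> g \<in> Arr C \<Longrightarrow> Cod C f = Dom C g \<Longrightarrow> Cod C (Cmp C g f) = Cod C g"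
    and id_right: "f \<in> Arr C \<Longrightarrow> Dom C f = X \<Longrightarrow> Cmp C f (Idm C X) = f"
    and id_left: "f \<in> Arr C \<Longrightarrow> Cod C f = X \<Longrightarrow> Cmp C (Idm C X) f = f"
    and cmp_assoc: "f \<in> Arr C \<Longrightarrow> g \<in> Arr C \<Longrightarrow> h \<in> Arr C \<Longrightarrow> Cod C f = Dom C g \<Longrightarrow>
       Cod C g = Dom C h \<Longrightarrow> Cmp C h (Cmp C g f) = Cmp C (Cmp C h g) f"
  using C unfolding category_def hom_def by auto

lemmas category_closure = dom_obj cod_obj id_arr id_dom id_cod cmp_arr cmp_dom cmp_cod

lemma cmp_hom: "category C \<Longrightarrow> f \<in> hom C X Y \<Longrightarrow> g \<in> hom C Y Z \<Longrightarrow> Cmp C g f \<in> hom C X Z"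
  by (auto simp: hom_def category_closure)

lemma cmp_assoc_hom: "category C \<Longrightarrow> f \<in> hom C W X \<Longrightarrow> g \<in> hom C X Y \<Longrightarrow> h \<in> hom C Y Z \<Longrightarrow>
    Cmp C h (Cmp C g f) = Cmp C (Cmp C h g) f"
  by (auto simp: hom_def cmp_assoc)

lemma id_hom: "category C \<Longrightarrow> X \<in> Obj C \<Longrightarrow> Idm C X \<in> hom C X X"
  by (auto simp: hom_def category_closure)

lemma id_left_hom: "category C \<Longrightarrow> f \<in> hom C X Y \<Longrightarrow> Cmp C (Idm C Y) f = f"
  by (auto simp: hom_def id_left)

lemma id_right_hom: "category C \<Longrightarrow> f \<in> hom C X Y \<Longrightarrow> Cmp C f (Idm C X) = f"
  by (auto simp: hom_def id_right)

lemma hom_objs: "category C \<Longrightarrow> f \<in> hom C X Y \<Longrightarrow> X \<in> Obj C \<and> Y \<in> Obj C"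
  by (auto simp: hom_def category_closure)

lemma functorD:
  assumes F: "is_functor C D F0 F1"
  shows functor_obj: "X \<in> Obj C \<Longrightarrow> F0 X \<in> Obj D"
    and functor_arr: "f \<in> Arr C \<Longrightarrow> F1 f \<in> Arr D"
    and functor_dom: "f \<in> Arr C \<Longrightarrow> Dom D (F1 f) = F0 (Dom C f)"
    and functor_cod: "f \<in> Arr C \<Longrightarrow> Cod D (F1 f) = F0 (Cod C f)"
    and functor_id: "X \<in> Obj C \<Longrightarrow> F1 (Idm C X) = Idm D (F0 X)"
    and functor_cmp: "f \<in> Arr C \<Longrightarrow> g \<in> Arr C \<Longrightarrow> Cod C f = Dom C g \<Longrightarrow>
       F1 (Cmp C g f) = Cmp D (F1 g) (F1 f)"
  using F unfolding is_functor_def hom_def by auto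

lemmas functor_closure = functor_obj functor_arr functor_dom functor_cod

lemma functor_hom: "is_functor C D F0 F1 \<Longrightarrow> f \<in> hom C X Y \<Longrightarrow> F1 f \<in> hom D (F0 X) (F0 Y)"
  by (auto simp: hom_def functor_closure)

lemma functor_cmp_hom: "is_functor C D F0 F1 \<Longrightarrow> f \<in> hom C X Y \<Longrightarrow> g \<in> hom C Y Z \<Longrightarrow>
    F1 (Cmp C g f) = Cmp D (F1 g) (F1 f)"
  by (auto simp: hom_def functor_cmp)

lemma fully_faithful_full: "fully_faithful C D F0 F1 \<Longrightarrow> X \<in> Obj C \<Longrightarrow> Y \<in> Obj C \<Longrightarrow>
    f' \<in> hom D (F0 X) (F0 Y) \<Longrightarrow> \<exists>f. f \<in> hom C X Y \<and> F1 f = f'"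
  unfolding fully_faithful_def bij_betw_def by (metis imageE)

lemma fully_faithful_faithful: "fully_faithful C D F0 F1 \<Longrightarrow> X \<in> Obj C \<Longrightarrow> Y \<in> Obj C \<Longrightarrow>
    f \<in> hom C X Y \<Longrightarrow> g \<in> hom C X Y \<Longrightarrow> F1 f = F1 g \<Longrightarrow> f = g"
  unfolding fully_faithful_def bij_betw_def inj_on_def by blast

lemma monoI:
  assumes "m \<in> Arr C"
    and "\<And>X g h. g \<in> hom C X (Dom C m) \<Longrightarrow> h \<in> hom C X (Dom C m) \<Longrightarrow>
      Cmp C m g = Cmp C m h \<Longrightarrow> g = h"
  shows "mono C m"
  unfolding mono_def
proof (intro conjI ballI impI)
  fix g h assume "g \<in> Arr C" "h \<in> Arr C"
    and "Cod C g = Dom C m \<and> Cod C h = Dom C m \<and> Dom C g = Dom C h \<and> Cmp C m g = Cmp C m h"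
  then show "g = h" using assms(2)[of g "Dom C g" h] by (simp add: hom_def)
qed (rule assms(1))

lemma monoD: "mono C m \<Longrightarrow> g \<in> hom C X (Dom C m) \<Longrightarrow> h \<in> hom C X (Dom C m) \<Longrightarrow>
    Cmp C m g = Cmp C m h \<Longrightarrow> g = h"
  unfolding mono_def hom_def by auto

definition is_iso :: "('o, 'm) cat \<Rightarrow> 'm \<Rightarrow> bool" where
  "is_iso C f \<longleftrightarrow> f \<in> Arr C \<and> (\<exists>g\<in>hom C (Cod C f) (Dom C f).
     Cmp C g f = Idm C (Dom C f) \<and> Cmp C f g = Idm C (Cod C f))"

lemma is_isoI:
  "f \<in> hom C X Y \<Longrightarrow> g \<in> hom C Y X \<Longrightarrow> Cmp C g f = Idm C X \<Longrightarrow> Cmp C f g = Idm C Y \<Longrightarrow>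
    is_iso C f"
  unfolding is_iso_def hom_def by auto

lemma is_isoE:
  assumes "is_iso C f" and "f \<in> hom C X Y"
  obtains g where "g \<in> hom C Y X" "Cmp C g f = Idm C X" "Cmp C f g = Idm C Y"
  using assms unfolding is_iso_def hom_def by auto

lemma is_iso_cancel_left:
  assumes C: "category C" and f: "f \<in> hom C X Y" and iso: "is_iso C f"
    and a: "a \<in> hom C W X" and b: "b \<in> hom C W X" and eq: "Cmp C f a = Cmp C f b"
  shows "a = b"
proof -
  obtain g where g: "g \<in> hom C Y X" "Cmp C g f = Idm C X" using is_isoE[OF iso f] by blast
  have "a = Cmp C g (Cmp C f a)"
    using cmp_assoc_hom[OF C a f g(1)] g(2) id_left_hom[OF C a] by simp
  also have "\<dots> = b"
    using eq cmp_assoc_hom[OF C b f g(1)] g(2) id_left_hom[OF C b] by simp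
  finally show ?thesis .
qed

lemma is_iso_cancel_right:
  assumes C: "category C" and f: "f \<in> hom C X Y" and iso: "is_iso C f"
    and a: "a \<in> hom C Y Z" and b: "b \<in> hom C Y Z" and eq: "Cmp C a f = Cmp C b f"
  shows "a = b"
proof -
  obtain g where g: "g \<in> hom C Y X" "Cmp C f g = Idm C Y" using is_isoE[OF iso f] by blast
  have "a = Cmp C (Cmp C a f) g"
    using cmp_assoc_hom[OF C g(1) f a] g(2) id_right_hom[OF C a] by simp
  also have "\<dots> = b"
    using eq cmp_assoc_hom[OF C g(1) f b] g(2) id_right_hom[OF C b] by simp
  finally show ?thesis .
qed

section \<open>Opposite categories\<close>

definition op :: "('o, 'm) cat \<Rightarrow> ('o, 'm) cat" where
  "op C = \<lparr>Obj = Obj C, Arr = Arr C, Dom = Cod C, Cod = Dom C, Cmp = (\<lambda>g f. Cmp C f g),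
     Idm = Idm C\<rparr>"

lemma op_simps [simp]:
  "Obj (op C) = Obj C" "Arr (op C) = Arr C" "Dom (op C) = Cod C" "Cod (op C) = Dom C"
  "Cmp (op C) g f = Cmp C f g" "Idm (op C) = Idm C"
  by (simp_all add: op_def)

lemma op_hom [simp]: "hom (op C) X Y = hom C Y X"
  by (auto simp: hom_def)

lemma op_category: "category C \<Longrightarrow> category (op C)"
  unfolding category_def by (auto simp: hom_def)

lemma op_mono [simp]: "mono (op C) m = epi C m"
  unfolding mono_def epi_def by auto

lemma op_zero_object [simp]: "zero_object (op C) Z = zero_object C Z"
  unfolding zero_object_def by auto

lemma op_zero_arrow [simp]: "zero_arrow (op C) z = zero_arrow C z"
  unfolding zero_arrow_def by auto

lemma op_is_kernel [simp]: "is_kernel (op C) f k = is_cokernel C f k"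
  unfolding is_kernel_def is_cokernel_def by auto

lemma op_is_section [simp]: "is_section (op C) f = retraction C f"
  unfolding is_section_def retraction_def by auto

lemma op_fully_invariant [simp]: "fully_invariant (op C) k = fully_coinvariant C k"
  unfolding fully_invariant_def fully_coinvariant_def by auto

lemma op_strongly_rickart: "strongly_rickart (op C) N M = dual_strongly_rickart C M N"
  unfolding strongly_rickart_def dual_strongly_rickart_def by auto

lemma op_functor: "is_functor C D F0 F1 \<Longrightarrow> is_functor (op C) (op D) F0 F1"
  unfolding is_functor_def by (auto simp: hom_def)

lemma op_fully_faithful: "fully_faithful C D F0 F1 \<Longrightarrow> fully_faithful (op C) (op D) F0 F1"
  unfolding fully_faithful_def by auto

lemma epiI:
  assumes "e \<in> Arr C"
    and "\<And>Y g h. g \<in> hom C (Cod C e) Y \<Longrightarrow> h \<in> hom C (Cod C e) Y \<Longrightarrow>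
      Cmp C g e = Cmp C h e \<Longrightarrow> g = h"
  shows "epi C e"
  using monoI[of e "op C"] assms by simp

lemma epiD: "epi C e \<Longrightarrow> g \<in> hom C (Cod C e) Y \<Longrightarrow> h \<in> hom C (Cod C e) Y \<Longrightarrow>
    Cmp C g e = Cmp C h e \<Longrightarrow> g = h"
  using monoD[of "op C" e] by simp

lemma zero_objectD:
  assumes Z: "zero_object C Z"
  shows zero_object_obj: "Z \<in> Obj C"
    and to_zero_exists: "X \<in> Obj C \<Longrightarrow> \<exists>f. f \<in> hom C X Z"
    and from_zero_exists: "X \<in> Obj C \<Longrightarrow> \<exists>f. f \<in> hom C Z X"
    and to_zero_unique: "X \<in> Obj C \<Longrightarrow> f \<in> hom C X Z \<Longrightarrow> g \<in> hom C X Z \<Longrightarrow> f = g"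
    and from_zero_unique: "X \<in> Obj C \<Longrightarrow> f \<in> hom C Z X \<Longrightarrow> g \<in> hom C Z X \<Longrightarrow> f = g"
  using Z unfolding zero_object_def by blast+

lemma zero_object_if_terminal:
  assumes C: "category C" and Z: "zero_object C Z" and T: "T \<in> Obj C"
    and to_T: "\<And>X. X \<in> Obj C \<Longrightarrow> \<exists>f. f \<in> hom C X T"
    and to_T_unique: "\<And>X f g. X \<in> Obj C \<Longrightarrow> f \<in> hom C X T \<Longrightarrow> g \<in> hom C X T \<Longrightarrow> f = g"
  shows "zero_object C T"
proof -
  obtain s where s: "s \<in> hom C T Z" using to_zero_exists[OF Z T] by blast
  obtain t where t: "t \<in> hom C Z T" using from_zero_exists[OF Z T] by blast
  have ts: "Cmp C t s = Idm C T"
    using to_T_unique[OF T cmp_hom[OF C s t] id_hom[OF C T]] .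
  have "\<exists>!f. f \<in> hom C T X" if X: "X \<in> Obj C" for X
  proof -
    obtain e where e: "e \<in> hom C Z X" using from_zero_exists[OF Z X] by blast
    then have "Cmp C e s \<in> hom C T X" using cmp_hom[OF C s] by blast
    moreover have "u = v" if u: "u \<in> hom C T X" and v: "v \<in> hom C T X" for u v
    proof -
      have ut: "Cmp C u t = Cmp C v t"
        using from_zero_unique[OF Z X cmp_hom[OF C t u] cmp_hom[OF C t v]] .
      have "u = Cmp C (Cmp C u t) s"
        using ts cmp_assoc_hom[OF C s t u] id_right_hom[OF C u] by simp
      also have "\<dots> = v"
        using ut ts cmp_assoc_hom[OF C s t v] id_right_hom[OF C v] by simp
      finally show "u = v" .
    qed
    ultimately show ?thesis by blast
  qed
  moreover have "\<exists>!f. f \<in> hom C X T" if "X \<in> Obj C" for X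
    using to_T to_T_unique that by blast
  ultimately show ?thesis
    unfolding zero_object_def using T by blast
qed

lemma zero_object_if_initial:
  assumes "category C" and "zero_object C Z" and "T \<in> Obj C"
    and "\<And>X. X \<in> Obj C \<Longrightarrow> \<exists>f. f \<in> hom C T X"
    and "\<And>X f g. X \<in> Obj C \<Longrightarrow> f \<in> hom C T X \<Longrightarrow> g \<in> hom C T X \<Longrightarrow> f = g"
  shows "zero_object C T"
  using zero_object_if_terminal[of "op C" Z T] op_category[OF assms(1)] assms(2-) by simp

lemma zero_arrow_cmp_right:
  assumes C: "category C" and z: "zero_arrow C z" and a: "a \<in> hom C X (Dom C z)"
  shows "zero_arrow C (Cmp C z a)"
proof -
  from z obtain Z p q where Z: "zero_object C Z" and p: "p \<in> hom C (Dom C z) Z"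
    and q: "q \<in> hom C Z (Cod C z)" and zq: "z = Cmp C q p"
    unfolding zero_arrow_def by blast
  have "Cmp C z a = Cmp C q (Cmp C p a)"
    using zq cmp_assoc_hom[OF C a p q] by simp
  moreover have "Cmp C p a \<in> hom C X Z" and "Cmp C z a \<in> hom C X (Cod C z)"
    using cmp_hom[OF C a p] cmp_hom[OF C a cmp_hom[OF C p q]] zq by simp_all
  ultimately show ?thesis
    unfolding zero_arrow_def using Z q by (auto simp: hom_def)
qed

lemma zero_arrow_unique:
  assumes C: "category C" and z1: "zero_arrow C z1" and z2: "zero_arrow C z2"
    and "Dom C z1 = Dom C z2" and "Cod C z1 = Cod C z2"
  shows "z1 = z2"
proof -
  from z1 obtain Z1 p1 q1 where Z1: "zero_object C Z1" and p1: "p1 \<in> hom C (Dom C z1) Z1"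
    and q1: "q1 \<in> hom C Z1 (Cod C z1)" and e1: "z1 = Cmp C q1 p1"
    unfolding zero_arrow_def by blast
  from z2 obtain Z2 p2 q2 where Z2: "zero_object C Z2" and p2: "p2 \<in> hom C (Dom C z1) Z2"
    and q2: "q2 \<in> hom C Z2 (Cod C z1)" and e2: "z2 = Cmp C q2 p2"
    using assms(4,5) unfolding zero_arrow_def by metis
  obtain i where i: "i \<in> hom C Z1 Z2"
    using from_zero_exists[OF Z1 zero_object_obj[OF Z2]] by blast
  have X: "Dom C z1 \<in> Obj C" and Y: "Cod C z1 \<in> Obj C"
    using hom_objs[OF C p1] hom_objs[OF C q1] by auto
  have "Cmp C i p1 = p2" using to_zero_unique[OF Z2 X cmp_hom[OF C p1 i] p2] .
  moreover have "Cmp C q2 i = q1" using from_zero_unique[OF Z1 Y cmp_hom[OF C i q2] q1] .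
  ultimately show ?thesis
    using e1 e2 cmp_assoc_hom[OF C p1 i q2] by simp
qed

lemma zero_arrow_exists:
  assumes C: "category C" and Z: "zero_object C Z" and X: "X \<in> Obj C" and Y: "Y \<in> Obj C"
  obtains z where "zero_arrow C z" and "z \<in> hom C X Y"
proof -
  obtain p where p: "p \<in> hom C X Z" using to_zero_exists[OF Z X] by blast
  obtain q where q: "q \<in> hom C Z Y" using from_zero_exists[OF Z Y] by blast
  have "Cmp C q p \<in> hom C X Y" using cmp_hom[OF C p q] .
  moreover have "zero_arrow C (Cmp C q p)"
    unfolding zero_arrow_def using calculation p q Z by (auto simp: hom_def)
  ultimately show ?thesis using that by blast
qed

lemma functor_zero_arrow:
  assumes F: "is_functor C D F0 F1"
    and zero_obj: "\<And>Z. zero_object C Z \<Longrightarrow> zero_object D (F0 Z)"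
    and z: "zero_arrow C z"
  shows "zero_arrow D (F1 z)"
proof -
  from z obtain Z p q where Z: "zero_object C Z" and p: "p \<in> hom C (Dom C z) Z"
    and q: "q \<in> hom C Z (Cod C z)" and zq: "z = Cmp C q p"
    unfolding zero_arrow_def by blast
  have "F1 z = Cmp D (F1 q) (F1 p)" using zq functor_cmp_hom[OF F p q] by simp
  moreover have "F1 z \<in> Arr D" using z functor_arr[OF F] unfolding zero_arrow_def by blast
  moreover have "F1 p \<in> hom D (Dom D (F1 z)) (F0 Z)" and "F1 q \<in> hom D (F0 Z) (Cod D (F1 z))"
    using functor_hom[OF F p] functor_hom[OF F q] z functor_closure[OF F]
    by (auto simp: zero_arrow_def)
  ultimately show ?thesis
    unfolding zero_arrow_def using zero_obj[OF Z] by blast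
qed

section \<open>Kernels and cokernels\<close>

lemma kernelD:
  assumes k: "is_kernel C f k"
  shows kernel_arr: "f \<in> Arr C" "k \<in> Arr C"
    and kernel_cod: "Cod C k = Dom C f"
    and kernel_zero: "zero_arrow C (Cmp C f k)"
    and kernel_factor: "g \<in> Arr C \<Longrightarrow> Cod C g = Dom C f \<Longrightarrow> zero_arrow C (Cmp C f g) \<Longrightarrow>
       \<exists>u. u \<in> hom C (Dom C g) (Dom C k) \<and> Cmp C k u = g"
    and kernel_factor_unique: "g \<in> Arr C \<Longrightarrow> Cod C g = Dom C f \<Longrightarrow> zero_arrow C (Cmp C f g) \<Longrightarrow>
       u \<in> hom C (Dom C g) (Dom C k) \<Longrightarrow> Cmp C k u = g \<Longrightarrow>
       u' \<in> hom C (Dom C g) (Dom C k) \<Longrightarrow> Cmp C k u' = g \<Longrightarrow> u = u'"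
  using k unfolding is_kernel_def by blast+

lemma cokernelD:
  assumes c: "is_cokernel C f c"
  shows cokernel_arr: "f \<in> Arr C" "c \<in> Arr C"
    and cokernel_dom: "Dom C c = Cod C f"
    and cokernel_zero: "zero_arrow C (Cmp C c f)"
    and cokernel_factor: "g \<in> Arr C \<Longrightarrow> Dom C g = Cod C f \<Longrightarrow> zero_arrow C (Cmp C g f) \<Longrightarrow>
       \<exists>u. u \<in> hom C (Cod C c) (Cod C g) \<and> Cmp C u c = g"
  using kernelD[of "op C" f c] c by auto

lemma kernel_mono:
  assumes C: "category C" and k: "is_kernel C f k"
  shows "mono C k"
proof (rule monoI[OF kernel_arr(2)[OF k]])
  fix X a b assume a: "a \<in> hom C X (Dom C k)" and b: "b \<in> hom C X (Dom C k)"
    and ab: "Cmp C k a = Cmp C k b"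
  have k_hom: "k \<in> hom C (Dom C k) (Dom C f)" and f_hom: "f \<in> hom C (Dom C f) (Cod C f)"
    using kernelD(1-3)[OF k] by (auto simp: hom_def)
  have ka: "Cmp C k a \<in> hom C X (Dom C f)" using cmp_hom[OF C a k_hom] .
  have "Dom C (Cmp C f k) = Dom C k"
    using cmp_hom[OF C k_hom f_hom] by (simp add: hom_def)
  then have "zero_arrow C (Cmp C (Cmp C f k) a)"
    using zero_arrow_cmp_right[OF C kernel_zero[OF k]] a by simp
  then have "zero_arrow C (Cmp C f (Cmp C k a))"
    using cmp_assoc_hom[OF C a k_hom f_hom] by simp
  moreover have "Dom C (Cmp C k a) = X" "Cod C (Cmp C k a) = Dom C f" "Cmp C k a \<in> Arr C"
    using ka by (simp_all add: hom_def)
  ultimately show "a = b"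
    using kernel_factor_unique[OF k, of "Cmp C k a" a b] a b ab by metis
qed

lemma cokernel_epi: "category C \<Longrightarrow> is_cokernel C f c \<Longrightarrow> epi C c"
  using kernel_mono[of "op C" f c] op_category[of C] by simp

lemma kernelI:
  assumes "f \<in> Arr C" "k \<in> Arr C" "Cod C k = Dom C f" "zero_arrow C (Cmp C f k)"
    and "mono C k"
    and "\<And>g. g \<in> Arr C \<Longrightarrow> Cod C g = Dom C f \<Longrightarrow> zero_arrow C (Cmp C f g) \<Longrightarrow>
       \<exists>u. u \<in> hom C (Dom C g) (Dom C k) \<and> Cmp C k u = g"
  shows "is_kernel C f k"
  unfolding is_kernel_def
  using assms monoD[OF assms(5)] by (metis (no_types, lifting))

lemma cokernelI:
  assumes "f \<in> Arr C" "c \<in> Arr C" "Dom C c = Cod C f" "zero_arrow C (Cmp C c f)"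
    and "epi C c"
    and "\<And>g. g \<in> Arr C \<Longrightarrow> Dom C g = Cod C f \<Longrightarrow> zero_arrow C (Cmp C g f) \<Longrightarrow>
       \<exists>u. u \<in> hom C (Cod C c) (Cod C g) \<and> Cmp C u c = g"
  shows "is_cokernel C f c"
  using kernelI[of f "op C" c] assms by simp

lemma kernels_factor:
  assumes C: "category C" and k: "is_kernel C f k" and k': "is_kernel C f k'"
  obtains \<phi> \<psi> where "\<phi> \<in> hom C (Dom C k') (Dom C k)" "Cmp C k \<phi> = k'"
    and "\<psi> \<in> hom C (Dom C k) (Dom C k')" "Cmp C k' \<psi> = k"
    and "Cmp C \<psi> \<phi> = Idm C (Dom C k')"
proof -
  obtain \<phi> where \<phi>: "\<phi> \<in> hom C (Dom C k') (Dom C k)" "Cmp C k \<phi> = k'"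
    using kernel_factor[OF k kernelD(2-4)[OF k']] by blast
  obtain \<psi> where \<psi>: "\<psi> \<in> hom C (Dom C k) (Dom C k')" "Cmp C k' \<psi> = k"
    using kernel_factor[OF k' kernelD(2-4)[OF k]] by blast
  have k'_hom: "k' \<in> hom C (Dom C k') (Cod C k')" using kernel_arr(2)[OF k'] by (simp add: hom_def)
  have K': "Dom C k' \<in> Obj C" using C kernel_arr(2)[OF k'] by (simp add: category_closure)
  have "Cmp C k' (Cmp C \<psi> \<phi>) = Cmp C k' (Idm C (Dom C k'))"
    using cmp_assoc_hom[OF C \<phi>(1) \<psi>(1), of k'] k'_hom \<phi>(2) \<psi>(2) id_right_hom[OF C k'_hom]
    by simp
  then have "Cmp C \<psi> \<phi> = Idm C (Dom C k')"
    using monoD[OF kernel_mono[OF C k'] cmp_hom[OF C \<phi>(1) \<psi>(1)] id_hom[OF C K']] by simp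
  with \<phi> \<psi> show ?thesis using that by blast
qed

lemma section_if_kernel_of_same:
  assumes C: "category C" and k: "is_kernel C f k" and k': "is_kernel C f k'"
    and s: "is_section C k"
  shows "is_section C k'"
proof -
  obtain \<phi> \<psi> where \<phi>: "\<phi> \<in> hom C (Dom C k') (Dom C k)" "Cmp C k \<phi> = k'"
    and \<psi>: "\<psi> \<in> hom C (Dom C k) (Dom C k')" "Cmp C \<psi> \<phi> = Idm C (Dom C k')"
    using kernels_factor[OF C k k'] by blast
  obtain r where r: "r \<in> hom C (Cod C k) (Dom C k)" "Cmp C r k = Idm C (Dom C k)"
    using s unfolding is_section_def by blast
  have k_hom: "k \<in> hom C (Dom C k) (Cod C k)" using kernel_arr(2)[OF k] by (simp add: hom_def)
  have "Cmp C (Cmp C \<psi> r) k' = Cmp C \<psi> (Cmp C (Cmp C r k) \<phi>)"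
    using \<phi>(2) cmp_assoc_hom[OF C \<phi>(1) k_hom r(1)] cmp_assoc_hom[OF C \<phi>(1) cmp_hom[OF C k_hom r(1)] \<psi>(1)]
      cmp_assoc_hom[OF C cmp_hom[OF C \<phi>(1) k_hom] r(1) \<psi>(1)]
    by simp
  also have "\<dots> = Idm C (Dom C k')"
    using r(2) \<psi>(2) id_left_hom[OF C \<phi>(1)] by simp
  finally have "Cmp C (Cmp C \<psi> r) k' = Idm C (Dom C k')" .
  moreover have "Cmp C \<psi> r \<in> hom C (Cod C k') (Dom C k')"
    using cmp_hom[OF C r(1) \<psi>(1)] kernel_cod[OF k] kernel_cod[OF k'] by simp
  ultimately show ?thesis
    unfolding is_section_def using kernel_arr(2)[OF k'] by blast
qed

lemma fully_invariant_if_kernel_of_same: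
  assumes C: "category C" and k: "is_kernel C f k" and k': "is_kernel C f k'"
    and fi: "fully_invariant C k"
  shows "fully_invariant C k'"
  unfolding fully_invariant_def
proof (intro conjI ballI)
  show "mono C k'" using kernel_mono[OF C k'] .
  fix h assume h: "h \<in> hom C (Cod C k') (Cod C k')"
  obtain \<phi> \<psi> where \<phi>: "\<phi> \<in> hom C (Dom C k') (Dom C k)" "Cmp C k \<phi> = k'"
    and \<psi>: "\<psi> \<in> hom C (Dom C k) (Dom C k')" "Cmp C k' \<psi> = k"
    using kernels_factor[OF C k k'] by blast
  have same_cod: "Cod C k' = Cod C k" using kernel_cod[OF k] kernel_cod[OF k'] by simp
  have k_hom: "k \<in> hom C (Dom C k) (Cod C k)" using kernel_arr(2)[OF k] by (simp add: hom_def)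
  have k'_hom: "k' \<in> hom C (Dom C k') (Cod C k)"
    using kernel_arr(2)[OF k'] same_cod by (simp add: hom_def)
  have h_hom: "h \<in> hom C (Cod C k) (Cod C k)" using h same_cod by simp
  obtain \<alpha> where \<alpha>: "\<alpha> \<in> hom C (Dom C k) (Dom C k)" "Cmp C h k = Cmp C k \<alpha>"
    using fi h_hom unfolding fully_invariant_def by blast
  have "Cmp C h k' = Cmp C (Cmp C h k) \<phi>"
    using \<phi>(2) cmp_assoc_hom[OF C \<phi>(1) k_hom h_hom] by simp
  also have "\<dots> = Cmp C (Cmp C (Cmp C k' \<psi>) \<alpha>) \<phi>"
    using \<alpha>(2) \<psi>(2) by simp
  also have "\<dots> = Cmp C k' (Cmp C (Cmp C \<psi> \<alpha>) \<phi>)"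
    using cmp_assoc_hom[OF C \<alpha>(1) \<psi>(1) k'_hom] cmp_assoc_hom[OF C \<phi>(1) cmp_hom[OF C \<alpha>(1) \<psi>(1)] k'_hom]
    by simp
  finally show "\<exists>\<beta>\<in>hom C (Dom C k') (Dom C k'). Cmp C h k' = Cmp C k' \<beta>"
    using cmp_hom[OF C \<phi>(1) cmp_hom[OF C \<alpha>(1) \<psi>(1)]] by blast
qed

section \<open>Transfer along fully faithful functors\<close>

lemma functor_preserves_section:
  assumes C: "category C" and F: "is_functor C D F0 F1" and s: "is_section C k"
  shows "is_section D (F1 k)"
proof -
  obtain r where r: "r \<in> hom C (Cod C k) (Dom C k)" "Cmp C r k = Idm C (Dom C k)"
    using s unfolding is_section_def by blast
  have k_hom: "k \<in> hom C (Dom C k) (Cod C k)" using s by (simp add: is_section_def hom_def)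
  have "Cmp D (F1 r) (F1 k) = Idm D (F0 (Dom C k))"
    using functor_cmp_hom[OF F k_hom r(1)] r(2) functor_id[OF F] hom_objs[OF C k_hom] by simp
  moreover have "F1 r \<in> hom D (Cod D (F1 k)) (Dom D (F1 k))" "F1 k \<in> Arr D"
    using functor_hom[OF F r(1)] functor_hom[OF F k_hom] by (simp_all add: hom_def)
  ultimately show ?thesis
    unfolding is_section_def using functor_hom[OF F k_hom] by (auto simp: hom_def)
qed

lemma fully_faithful_reflects_section:
  assumes C: "category C" and F: "is_functor C D F0 F1" and ff: "fully_faithful C D F0 F1"
    and k: "k \<in> hom C K M" and s: "is_section D (F1 k)"
  shows "is_section C k"
proof -
  have K: "K \<in> Obj C" and M: "M \<in> Obj C" using hom_objs[OF C k] by auto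
  obtain r' where r': "r' \<in> hom D (F0 M) (F0 K)" "Cmp D r' (F1 k) = Idm D (F0 K)"
    using s functor_hom[OF F k] unfolding is_section_def by (auto simp: hom_def)
  obtain r where r: "r \<in> hom C M K" "F1 r = r'" using fully_faithful_full[OF ff M K r'(1)] by blast
  have "F1 (Cmp C r k) = F1 (Idm C K)"
    using functor_cmp_hom[OF F k r(1)] r r'(2) functor_id[OF F K] by simp
  then have "Cmp C r k = Idm C K"
    using fully_faithful_faithful[OF ff K K cmp_hom[OF C k r(1)] id_hom[OF C K]] by simp
  then show ?thesis
    unfolding is_section_def using r(1) k by (auto simp: hom_def)
qed

lemma fully_faithful_preserves_invariance:
  assumes F: "is_functor C D F0 F1" and ff: "fully_faithful C D F0 F1"
    and C: "category C" and k: "k \<in> hom C K M" and fi: "fully_invariant C k"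
    and mono: "mono D (F1 k)"
  shows "fully_invariant D (F1 k)"
  unfolding fully_invariant_def
proof (intro conjI ballI)
  show "mono D (F1 k)" using mono .
  have K: "K \<in> Obj C" and M: "M \<in> Obj C" using hom_objs[OF C k] by auto
  have dom_cod: "Dom D (F1 k) = F0 K" "Cod D (F1 k) = F0 M"
    using functor_hom[OF F k] by (simp_all add: hom_def)
  fix h assume "h \<in> hom D (Cod D (F1 k)) (Cod D (F1 k))"
  then obtain h0 where h0: "h0 \<in> hom C M M" "F1 h0 = h"
    using fully_faithful_full[OF ff M M] dom_cod by auto
  obtain \<alpha> where \<alpha>: "\<alpha> \<in> hom C K K" "Cmp C h0 k = Cmp C k \<alpha>"
    using fi h0(1) k unfolding fully_invariant_def by (auto simp: hom_def)
  have "Cmp D h (F1 k) = Cmp D (F1 k) (F1 \<alpha>)"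
    using \<alpha>(2) functor_cmp_hom[OF F k h0(1)] functor_cmp_hom[OF F \<alpha>(1) k] h0(2) by simp
  then show "\<exists>\<beta>\<in>hom D (Dom D (F1 k)) (Dom D (F1 k)). Cmp D h (F1 k) = Cmp D (F1 k) \<beta>"
    using functor_hom[OF F \<alpha>(1)] dom_cod by auto
qed

lemma fully_faithful_reflects_invariance:
  assumes F: "is_functor C D F0 F1" and ff: "fully_faithful C D F0 F1"
    and C: "category C" and k: "k \<in> hom C K M" and mono: "mono C k"
    and fi: "fully_invariant D (F1 k)"
  shows "fully_invariant C k"
  unfolding fully_invariant_def
proof (intro conjI ballI)
  show "mono C k" using mono .
  have K: "K \<in> Obj C" and M: "M \<in> Obj C" using hom_objs[OF C k] by auto
  fix h assume "h \<in> hom C (Cod C k) (Cod C k)"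
  then have h: "h \<in> hom C M M" using k by (simp add: hom_def)
  obtain \<alpha>' where \<alpha>': "\<alpha>' \<in> hom D (F0 K) (F0 K)" "Cmp D (F1 h) (F1 k) = Cmp D (F1 k) \<alpha>'"
    using fi functor_hom[OF F h] functor_hom[OF F k] unfolding fully_invariant_def
    by (auto simp: hom_def)
  obtain \<alpha> where \<alpha>: "\<alpha> \<in> hom C K K" "F1 \<alpha> = \<alpha>'" using fully_faithful_full[OF ff K K \<alpha>'(1)] by blast
  have "F1 (Cmp C h k) = F1 (Cmp C k \<alpha>)"
    using functor_cmp_hom[OF F k h] functor_cmp_hom[OF F \<alpha>(1) k] \<alpha> \<alpha>'(2) by simp
  then have "Cmp C h k = Cmp C k \<alpha>"
    using fully_faithful_faithful[OF ff K M cmp_hom[OF C k h] cmp_hom[OF C \<alpha>(1) k]] by simp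
  then show "\<exists>\<beta>\<in>hom C (Dom C k) (Dom C k). Cmp C h k = Cmp C k \<beta>"
    using \<alpha>(1) k by (auto simp: hom_def)
qed

lemma strongly_rickart_iff_fully_faithful_image:
  assumes C: "category C" and D: "category D"
    and F: "is_functor C D F0 F1" and ff: "fully_faithful C D F0 F1"
    and kernels: "\<And>f. f \<in> Arr C \<Longrightarrow> \<exists>k. is_kernel C f k"
    and preserves: "\<And>f k. is_kernel C f k \<Longrightarrow> is_kernel D (F1 f) (F1 k)"
    and M: "M \<in> Obj C" and N: "N \<in> Obj C"
  shows "strongly_rickart C M N \<longleftrightarrow> strongly_rickart D (F0 M) (F0 N)"
proof
  assume rickart: "strongly_rickart C M N"
  show "strongly_rickart D (F0 M) (F0 N)"
    unfolding strongly_rickart_def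
  proof (intro ballI allI impI)
    fix f' k' assume f': "f' \<in> hom D (F0 M) (F0 N)" and k': "is_kernel D f' k'"
    obtain f where f: "f \<in> hom C M N" "F1 f = f'" using fully_faithful_full[OF ff M N f'] by blast
    obtain k where k: "is_kernel C f k" using kernels f(1) by (auto simp: hom_def)
    have k_hom: "k \<in> hom C (Dom C k) M" using kernelD(2,3)[OF k] f(1) by (simp add: hom_def)
    have Fk: "is_kernel D f' (F1 k)" using preserves[OF k] f(2) by simp
    have "is_section C k" "fully_invariant C k" using rickart f(1) k by (auto simp: strongly_rickart_def)
    then have "is_section D (F1 k)" "fully_invariant D (F1 k)"
      using functor_preserves_section[OF C F]
        fully_faithful_preserves_invariance[OF F ff C k_hom _ kernel_mono[OF D Fk]] by auto
    then show "is_section D k' \<and> fully_invariant D k'"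
      using section_if_kernel_of_same[OF D Fk k'] fully_invariant_if_kernel_of_same[OF D Fk k']
      by blast
  qed
next
  assume rickart: "strongly_rickart D (F0 M) (F0 N)"
  show "strongly_rickart C M N"
    unfolding strongly_rickart_def
  proof (intro ballI allI impI)
    fix f k assume f: "f \<in> hom C M N" and k: "is_kernel C f k"
    have k_hom: "k \<in> hom C (Dom C k) M" using kernelD(2,3)[OF k] f by (simp add: hom_def)
    have "is_section D (F1 k)" "fully_invariant D (F1 k)"
      using rickart functor_hom[OF F f] preserves[OF k] by (auto simp: strongly_rickart_def)
    then show "is_section C k \<and> fully_invariant C k"
      using fully_faithful_reflects_section[OF C F ff k_hom]
        fully_faithful_reflects_invariance[OF F ff C k_hom kernel_mono[OF C k]] by blast
  qed
qed

lemma dual_strongly_rickart_iff_fully_faithful_image: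
  assumes C: "category C" and D: "category D"
    and F: "is_functor C D F0 F1" and ff: "fully_faithful C D F0 F1"
    and cokernels: "\<And>f. f \<in> Arr C \<Longrightarrow> \<exists>c. is_cokernel C f c"
    and preserves: "\<And>f c. is_cokernel C f c \<Longrightarrow> is_cokernel D (F1 f) (F1 c)"
    and M: "M \<in> Obj C" and N: "N \<in> Obj C"
  shows "dual_strongly_rickart C M N \<longleftrightarrow> dual_strongly_rickart D (F0 M) (F0 N)"
  using strongly_rickart_iff_fully_faithful_image[OF op_category[OF C] op_category[OF D]
      op_functor[OF F] op_fully_faithful[OF ff], of N M] cokernels preserves M N
  by (simp add: op_strongly_rickart)

section \<open>Adjunctions\<close>

locale adjoint =
  fixes C :: "('a, 'b) cat" and D :: "('c, 'd) cat"
    and L0 :: "'a \<Rightarrow> 'c" and L1 :: "'b \<Rightarrow> 'd" and G0 :: "'c \<Rightarrow> 'a" and G1 :: "'d \<Rightarrow> 'b"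
    and \<eta> :: "'a \<Rightarrow> 'b"
  assumes cat_C: "category C" and cat_D: "category D"
    and left_functor: "is_functor C D L0 L1" and right_functor: "is_functor D C G0 G1"
    and unit_hom: "X \<in> Obj C \<Longrightarrow> \<eta> X \<in> hom C X (G0 (L0 X))"
    and unit_natural: "h \<in> hom C U V \<Longrightarrow> Cmp C (G1 (L1 h)) (\<eta> U) = Cmp C (\<eta> V) h"
    and transpose_exists: "X \<in> Obj C \<Longrightarrow> Y \<in> Obj D \<Longrightarrow> g \<in> hom C X (G0 Y) \<Longrightarrow>
      \<exists>f. f \<in> hom D (L0 X) Y \<and> Cmp C (G1 f) (\<eta> X) = g"
    and transpose_inj: "X \<in> Obj C \<Longrightarrow> f \<in> hom D (L0 X) Y \<Longrightarrow> f' \<in> hom D (L0 X) Y \<Longrightarrow>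
      Cmp C (G1 f) (\<eta> X) = Cmp C (G1 f') (\<eta> X) \<Longrightarrow> f = f'"

lemma adjunction_adjoint:
  assumes C: "category C" and D: "category D" and adj: "adjunction C D L0 L1 G0 G1"
  obtains \<eta> where "adjoint C D L0 L1 G0 G1 \<eta>"
proof -
  have L: "is_functor C D L0 L1" and G: "is_functor D C G0 G1"
    using adj unfolding adjunction_def by simp_all
  obtain \<eta> where unit: "\<forall>X\<in>Obj C. \<eta> X \<in> hom C X (G0 (L0 X))"
    and natural: "\<forall>h\<in>Arr C. Cmp C (G1 (L1 h)) (\<eta> (Dom C h)) = Cmp C (\<eta> (Cod C h)) h"
    and universal: "\<forall>X\<in>Obj C. \<forall>Y\<in>Obj D. \<forall>g\<in>hom C X (G0 Y).
       \<exists>!f. f \<in> hom D (L0 X) Y \<and> Cmp C (G1 f) (\<eta> X) = g"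
    using adj unfolding adjunction_def by (elim conjE exE) (rule that)
  have "adjoint C D L0 L1 G0 G1 \<eta>"
  proof
    show "Cmp C (G1 (L1 h)) (\<eta> U) = Cmp C (\<eta> V) h" if "h \<in> hom C U V" for h U V
      using natural that by (auto simp: hom_def)
    show "\<exists>f. f \<in> hom D (L0 X) Y \<and> Cmp C (G1 f) (\<eta> X) = g"
      if "X \<in> Obj C" "Y \<in> Obj D" "g \<in> hom C X (G0 Y)" for X Y g
      using ex1_implies_ex[OF universal[rule_format, OF that]] .
    show "f = f'" if X: "X \<in> Obj C" and f: "f \<in> hom D (L0 X) Y" and f': "f' \<in> hom D (L0 X) Y"
      and eq: "Cmp C (G1 f) (\<eta> X) = Cmp C (G1 f') (\<eta> X)" for X Y f f'
    proof -
      have "Cmp C (G1 f) (\<eta> X) \<in> hom C X (G0 Y)"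
        using cmp_hom[OF C _ functor_hom[OF G f]] unit X by blast
      then have "\<exists>!u. u \<in> hom D (L0 X) Y \<and> Cmp C (G1 u) (\<eta> X) = Cmp C (G1 f) (\<eta> X)"
        using universal[rule_format, OF X] hom_objs[OF D f] by blast
      then obtain u where u: "\<forall>v. v \<in> hom D (L0 X) Y \<and> Cmp C (G1 v) (\<eta> X) = Cmp C (G1 f) (\<eta> X) \<longrightarrow> v = u"
        by (elim ex1E) blast
      have "f = u" using u f by blast
      moreover have "f' = u" using u f' eq by simp
      ultimately show ?thesis by simp
    qed
  qed (use C D L G unit in \<open>simp_all add: Ball_def\<close>)
  then show ?thesis using that by blast
qed

context adjoint
begin

lemma transpose_hom: "X \<in> Obj C \<Longrightarrow> f \<in> hom D (L0 X) Y \<Longrightarrow> Cmp C (G1 f) (\<eta> X) \<in> hom C X (G0 Y)"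
  using cmp_hom[OF cat_C unit_hom functor_hom[OF right_functor]] by blast

lemma transpose_cmp_left:
  assumes X: "X \<in> Obj C" and f: "f \<in> hom D (L0 X) Y" and g: "g \<in> hom D Y Z"
  shows "Cmp C (G1 (Cmp D g f)) (\<eta> X) = Cmp C (G1 g) (Cmp C (G1 f) (\<eta> X))"
  using functor_cmp_hom[OF right_functor f g] cmp_assoc_hom[OF cat_C unit_hom[OF X]
      functor_hom[OF right_functor f] functor_hom[OF right_functor g]]
  by simp

lemma transpose_cmp_right:
  assumes a: "a \<in> hom C X Y" and v: "v \<in> hom D (L0 Y) W"
  shows "Cmp C (Cmp C (G1 v) (\<eta> Y)) a = Cmp C (G1 (Cmp D v (L1 a))) (\<eta> X)"
proof -
  have X: "X \<in> Obj C" and Y: "Y \<in> Obj C" using hom_objs[OF cat_C a] by auto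
  have La: "L1 a \<in> hom D (L0 X) (L0 Y)" using functor_hom[OF left_functor a] .
  have "Cmp C (Cmp C (G1 v) (\<eta> Y)) a = Cmp C (G1 v) (Cmp C (\<eta> Y) a)"
    using cmp_assoc_hom[OF cat_C a unit_hom[OF Y] functor_hom[OF right_functor v]] by simp
  also have "\<dots> = Cmp C (G1 v) (Cmp C (G1 (L1 a)) (\<eta> X))"
    using unit_natural[OF a] by simp
  also have "\<dots> = Cmp C (G1 (Cmp D v (L1 a))) (\<eta> X)"
    using transpose_cmp_left[OF X La v] by simp
  finally show ?thesis .
qed

lemma right_adjoint_zero_object:
  assumes Z: "zero_object D Z" and ZC: "zero_object C Z'"
  shows "zero_object C (G0 Z)"
proof (rule zero_object_if_terminal[OF cat_C ZC])
  have Z_obj: "Z \<in> Obj D" using zero_object_obj[OF Z] .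
  show "G0 Z \<in> Obj C" using functor_obj[OF right_functor Z_obj] .
  show "\<exists>f. f \<in> hom C X (G0 Z)" if X: "X \<in> Obj C" for X
    using to_zero_exists[OF Z functor_obj[OF left_functor X]] transpose_hom[OF X] by blast
  show "f = g" if X: "X \<in> Obj C" and f: "f \<in> hom C X (G0 Z)" and g: "g \<in> hom C X (G0 Z)"
    for X f g
  proof -
    obtain f' where f': "f' \<in> hom D (L0 X) Z" "Cmp C (G1 f') (\<eta> X) = f"
      using transpose_exists[OF X Z_obj f] by blast
    obtain g' where g': "g' \<in> hom D (L0 X) Z" "Cmp C (G1 g') (\<eta> X) = g"
      using transpose_exists[OF X Z_obj g] by blast
    show ?thesis
      using to_zero_unique[OF Z functor_obj[OF left_functor X] f'(1) g'(1)] f' g' by simp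
  qed
qed

lemma left_adjoint_zero_object:
  assumes Z: "zero_object C Z" and ZD: "zero_object D Z'"
  shows "zero_object D (L0 Z)"
proof (rule zero_object_if_initial[OF cat_D ZD])
  have Z_obj: "Z \<in> Obj C" using zero_object_obj[OF Z] .
  show "L0 Z \<in> Obj D" using functor_obj[OF left_functor Z_obj] .
  show "\<exists>f. f \<in> hom D (L0 Z) Y" if Y: "Y \<in> Obj D" for Y
    using from_zero_exists[OF Z functor_obj[OF right_functor Y]] transpose_exists[OF Z_obj Y]
    by blast
  show "f = g" if Y: "Y \<in> Obj D" and f: "f \<in> hom D (L0 Z) Y" and g: "g \<in> hom D (L0 Z) Y"
    for Y f g
    using from_zero_unique[OF Z functor_obj[OF right_functor Y] transpose_hom[OF Z_obj f]
        transpose_hom[OF Z_obj g]] transpose_inj[OF Z_obj f g]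
    by blast
qed

lemma right_adjoint_zero_arrow: "zero_object C Z \<Longrightarrow> zero_arrow D z \<Longrightarrow> zero_arrow C (G1 z)"
  using functor_zero_arrow[OF right_functor] right_adjoint_zero_object by blast

lemma left_adjoint_zero_arrow: "zero_object D Z \<Longrightarrow> zero_arrow C z \<Longrightarrow> zero_arrow D (L1 z)"
  using functor_zero_arrow[OF left_functor] left_adjoint_zero_object by blast

lemma zero_arrow_if_transpose_zero:
  assumes ZC: "zero_object C ZC" and ZD: "zero_object D ZD"
    and X: "X \<in> Obj C" and h: "h \<in> hom D (L0 X) Y"
    and zero: "zero_arrow C (Cmp C (G1 h) (\<eta> X))"
  shows "zero_arrow D h"
proof -
  have Y: "Y \<in> Obj D" using hom_objs[OF cat_D h] by simp
  obtain z where z: "zero_arrow D z" "z \<in> hom D (L0 X) Y"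
    using zero_arrow_exists[OF cat_D ZD functor_obj[OF left_functor X] Y] by blast
  have Gz: "G1 z \<in> hom C (G0 (L0 X)) (G0 Y)" using functor_hom[OF right_functor z(2)] .
  have "zero_arrow C (Cmp C (G1 z) (\<eta> X))"
    using zero_arrow_cmp_right[OF cat_C right_adjoint_zero_arrow[OF ZC z(1)]] unit_hom[OF X] Gz
    by (simp add: hom_def)
  then have "Cmp C (G1 z) (\<eta> X) = Cmp C (G1 h) (\<eta> X)"
    using zero_arrow_unique[OF cat_C _ zero] transpose_hom[OF X z(2)] transpose_hom[OF X h]
    by (simp add: hom_def)
  then show ?thesis using transpose_inj[OF X z(2) h] z(1) by simp
qed

lemma right_adjoint_preserves_mono:
  assumes m: "mono D m"
  shows "mono C (G1 m)"
proof (rule monoI)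
  have m_hom: "m \<in> hom D (Dom D m) (Cod D m)" using m by (simp add: mono_def hom_def)
  show "G1 m \<in> Arr C" using functor_arr[OF right_functor] m by (simp add: mono_def)
  fix X a b assume a: "a \<in> hom C X (Dom C (G1 m))" and b: "b \<in> hom C X (Dom C (G1 m))"
    and ab: "Cmp C (G1 m) a = Cmp C (G1 m) b"
  have dom: "Dom C (G1 m) = G0 (Dom D m)"
    using functor_hom[OF right_functor m_hom] by (simp add: hom_def)
  have X: "X \<in> Obj C" using hom_objs[OF cat_C a] by simp
  have K: "Dom D m \<in> Obj D" using hom_objs[OF cat_D m_hom] by simp
  obtain a' where a': "a' \<in> hom D (L0 X) (Dom D m)" "Cmp C (G1 a') (\<eta> X) = a"
    using transpose_exists[OF X K] a dom by auto
  obtain b' where b': "b' \<in> hom D (L0 X) (Dom D m)" "Cmp C (G1 b') (\<eta> X) = b"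
    using transpose_exists[OF X K] b dom by auto
  have "Cmp D m a' = Cmp D m b'"
    using transpose_inj[OF X cmp_hom[OF cat_D a'(1) m_hom] cmp_hom[OF cat_D b'(1) m_hom]]
      transpose_cmp_left[OF X a'(1) m_hom] transpose_cmp_left[OF X b'(1) m_hom] a'(2) b'(2) ab
    by simp
  then show "a = b" using monoD[OF m a'(1) b'(1)] a'(2) b'(2) by simp
qed

lemma left_adjoint_preserves_epi:
  assumes e: "epi C e"
  shows "epi D (L1 e)"
proof (rule epiI)
  have e_hom: "e \<in> hom C (Dom C e) (Cod C e)" using e by (simp add: epi_def hom_def)
  show "L1 e \<in> Arr D" using functor_arr[OF left_functor] e by (simp add: epi_def)
  fix W g h assume g: "g \<in> hom D (Cod D (L1 e)) W" and h: "h \<in> hom D (Cod D (L1 e)) W"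
    and gh: "Cmp D g (L1 e) = Cmp D h (L1 e)"
  have cod: "Cod D (L1 e) = L0 (Cod C e)"
    using functor_hom[OF left_functor e_hom] by (simp add: hom_def)
  have Q: "Cod C e \<in> Obj C" using hom_objs[OF cat_C e_hom] by simp
  have "Cmp C (Cmp C (G1 g) (\<eta> (Cod C e))) e = Cmp C (Cmp C (G1 h) (\<eta> (Cod C e))) e"
    using transpose_cmp_right[OF e_hom] g h gh cod by simp
  moreover have g': "g \<in> hom D (L0 (Cod C e)) W" and h': "h \<in> hom D (L0 (Cod C e)) W"
    using g h cod by simp_all
  ultimately have "Cmp C (G1 g) (\<eta> (Cod C e)) = Cmp C (G1 h) (\<eta> (Cod C e))"
    using epiD[OF e transpose_hom[OF Q g'] transpose_hom[OF Q h']] by simp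
  then show "g = h" using transpose_inj[OF Q g' h'] by simp
qed

lemma right_adjoint_preserves_kernel:
  assumes ZC: "zero_object C ZC" and ZD: "zero_object D ZD" and k: "is_kernel D g k"
  shows "is_kernel C (G1 g) (G1 k)"
proof (rule kernelI)
  obtain K X Y where k_hom: "k \<in> hom D K X" and g_hom: "g \<in> hom D X Y"
    using kernelD(1-3)[OF k] by (auto simp: hom_def)
  have Gk: "G1 k \<in> hom C (G0 K) (G0 X)" and Gg: "G1 g \<in> hom C (G0 X) (G0 Y)"
    using functor_hom[OF right_functor k_hom] functor_hom[OF right_functor g_hom] .
  then show "G1 g \<in> Arr C" "G1 k \<in> Arr C" "Cod C (G1 k) = Dom C (G1 g)"
    by (simp_all add: hom_def)
  show "zero_arrow C (Cmp C (G1 g) (G1 k))"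
    using functor_cmp_hom[OF right_functor k_hom g_hom] right_adjoint_zero_arrow[OF ZC kernel_zero[OF k]]
    by simp
  show "mono C (G1 k)" using right_adjoint_preserves_mono[OF kernel_mono[OF cat_D k]] .
  fix h assume h: "h \<in> Arr C" "Cod C h = Dom C (G1 g)" "zero_arrow C (Cmp C (G1 g) h)"
  define W where "W = Dom C h"
  have W: "W \<in> Obj C" using dom_obj[OF cat_C h(1)] by (simp add: W_def)
  have h_hom: "h \<in> hom C W (G0 X)" using h(1,2) Gg by (simp add: hom_def W_def)
  obtain h' where h': "h' \<in> hom D (L0 W) X" "Cmp C (G1 h') (\<eta> W) = h"
    using transpose_exists[OF W _ h_hom] hom_objs[OF cat_D g_hom] by blast
  have "Cmp C (G1 (Cmp D g h')) (\<eta> W) = Cmp C (G1 g) h"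
    using transpose_cmp_left[OF W h'(1) g_hom] h'(2) by simp
  then have "zero_arrow D (Cmp D g h')"
    using zero_arrow_if_transpose_zero[OF ZC ZD W cmp_hom[OF cat_D h'(1) g_hom]] h(3) by simp
  then obtain u where u: "u \<in> hom D (L0 W) K" "Cmp D k u = h'"
    using kernel_factor[OF k, of h'] h'(1) k_hom g_hom by (auto simp: hom_def)
  then have "Cmp C (G1 k) (Cmp C (G1 u) (\<eta> W)) = h"
    using transpose_cmp_left[OF W u(1) k_hom] h'(2) by simp
  then show "\<exists>u. u \<in> hom C (Dom C h) (Dom C (G1 k)) \<and> Cmp C (G1 k) u = h"
    using transpose_hom[OF W u(1)] Gk by (auto simp: hom_def W_def)
qed

lemma left_adjoint_preserves_cokernel:
  assumes ZC: "zero_object C ZC" and ZD: "zero_object D ZD" and c: "is_cokernel C f c"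
  shows "is_cokernel D (L1 f) (L1 c)"
proof (rule cokernelI)
  obtain X Y Q where f_hom: "f \<in> hom C X Y" and c_hom: "c \<in> hom C Y Q"
    using cokernelD(1-3)[OF c] by (auto simp: hom_def)
  have X: "X \<in> Obj C" and Y: "Y \<in> Obj C" and Q: "Q \<in> Obj C"
    using hom_objs[OF cat_C f_hom] hom_objs[OF cat_C c_hom] by auto
  have Lf: "L1 f \<in> hom D (L0 X) (L0 Y)" and Lc: "L1 c \<in> hom D (L0 Y) (L0 Q)"
    using functor_hom[OF left_functor f_hom] functor_hom[OF left_functor c_hom] .
  then show "L1 f \<in> Arr D" "L1 c \<in> Arr D" "Dom D (L1 c) = Cod D (L1 f)"
    by (simp_all add: hom_def)
  show "zero_arrow D (Cmp D (L1 c) (L1 f))"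
    using functor_cmp_hom[OF left_functor f_hom c_hom] left_adjoint_zero_arrow[OF ZD cokernel_zero[OF c]]
    by simp
  show "epi D (L1 c)" using left_adjoint_preserves_epi[OF cokernel_epi[OF cat_C c]] .
  fix h assume h: "h \<in> Arr D" "Dom D h = Cod D (L1 f)" "zero_arrow D (Cmp D h (L1 f))"
  define W where "W = Cod D h"
  have h_hom: "h \<in> hom D (L0 Y) W" using h(1,2) Lf by (simp add: hom_def W_def)
  have W: "W \<in> Obj D" using hom_objs[OF cat_D h_hom] by simp
  have h_transpose: "Cmp C (G1 h) (\<eta> Y) \<in> hom C Y (G0 W)" using transpose_hom[OF Y h_hom] .
  have "Cmp C (Cmp C (G1 h) (\<eta> Y)) f = Cmp C (G1 (Cmp D h (L1 f))) (\<eta> X)"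
    using transpose_cmp_right[OF f_hom h_hom] .
  moreover have "zero_arrow C (Cmp C (G1 (Cmp D h (L1 f))) (\<eta> X))"
    using zero_arrow_cmp_right[OF cat_C right_adjoint_zero_arrow[OF ZC h(3)]] unit_hom[OF X]
      functor_hom[OF right_functor cmp_hom[OF cat_D Lf h_hom]]
    by (simp add: hom_def)
  ultimately obtain u where u: "u \<in> hom C Q (G0 W)" "Cmp C u c = Cmp C (G1 h) (\<eta> Y)"
    using cokernel_factor[OF c, of "Cmp C (G1 h) (\<eta> Y)"] h_transpose f_hom c_hom
    by (auto simp: hom_def)
  obtain u' where u': "u' \<in> hom D (L0 Q) W" "Cmp C (G1 u') (\<eta> Q) = u"
    using transpose_exists[OF Q W u(1)] by blast
  have "Cmp C (G1 (Cmp D u' (L1 c))) (\<eta> Y) = Cmp C (G1 h) (\<eta> Y)"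
    using transpose_cmp_right[OF c_hom u'(1)] u'(2) u(2) by simp
  then have "Cmp D u' (L1 c) = h"
    using transpose_inj[OF Y cmp_hom[OF cat_D Lc u'(1)] h_hom] by simp
  then show "\<exists>u. u \<in> hom D (Cod D (L1 c)) (Cod D h) \<and> Cmp D u (L1 c) = h"
    using u'(1) Lc by (auto simp: hom_def W_def)
qed

lemma unit_iso_if_left_fully_faithful:
  assumes ff: "fully_faithful C D L0 L1" and X: "X \<in> Obj C"
  shows "is_iso C (\<eta> X)"
proof -
  define P where "P = G0 (L0 X)"
  have LX: "L0 X \<in> Obj D" using functor_obj[OF left_functor X] .
  have P: "P \<in> Obj C" using functor_obj[OF right_functor LX] by (simp add: P_def)
  have unit_X: "\<eta> X \<in> hom C X P" using unit_hom[OF X] by (simp add: P_def)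
  obtain f where f: "f \<in> hom D (L0 P) (L0 X)" "Cmp C (G1 f) (\<eta> P) = Idm C P"
    using transpose_exists[OF P LX] id_hom[OF cat_C P] by (auto simp: P_def)
  obtain r where r: "r \<in> hom C P X" "L1 r = f" using fully_faithful_full[OF ff P X f(1)] by blast
  have right_inverse: "Cmp C (\<eta> X) r = Idm C P"
    using unit_natural[OF r(1)] r(2) f(2) by simp
  have "Cmp C (G1 (L1 (Cmp C r (\<eta> X)))) (\<eta> X) = Cmp C (G1 (L1 (Idm C X))) (\<eta> X)"
    using unit_natural[OF cmp_hom[OF cat_C unit_X r(1)]] unit_natural[OF id_hom[OF cat_C X]]
      cmp_assoc_hom[OF cat_C unit_X r(1) unit_X] right_inverse
      id_left_hom[OF cat_C unit_X] id_right_hom[OF cat_C unit_X]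
    by simp
  then have "L1 (Cmp C r (\<eta> X)) = L1 (Idm C X)"
    using transpose_inj[OF X] functor_hom[OF left_functor cmp_hom[OF cat_C unit_X r(1)]]
      functor_hom[OF left_functor id_hom[OF cat_C X]]
    by blast
  then have "Cmp C r (\<eta> X) = Idm C X"
    using fully_faithful_faithful[OF ff X X cmp_hom[OF cat_C unit_X r(1)] id_hom[OF cat_C X]] by simp
  then show ?thesis using is_isoI[OF unit_X r(1) _ right_inverse] by simp
qed

lemma left_fully_faithful_if_unit_iso:
  assumes iso: "\<forall>X\<in>Obj C. is_iso C (\<eta> X)"
  shows "fully_faithful C D L0 L1"
  unfolding fully_faithful_def bij_betw_def
proof (intro ballI conjI)
  fix X Y assume X: "X \<in> Obj C" and Y: "Y \<in> Obj C"
  have unit_X: "\<eta> X \<in> hom C X (G0 (L0 X))" and unit_Y: "\<eta> Y \<in> hom C Y (G0 (L0 Y))"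
    using unit_hom[OF X] unit_hom[OF Y] .
  obtain r where r: "r \<in> hom C (G0 (L0 Y)) Y" "Cmp C (\<eta> Y) r = Idm C (G0 (L0 Y))"
    using is_isoE[OF iso[rule_format, OF Y] unit_Y] by blast
  show "inj_on L1 (hom C X Y)"
  proof (rule inj_onI)
    fix a b assume a: "a \<in> hom C X Y" and b: "b \<in> hom C X Y" and eq: "L1 a = L1 b"
    have "Cmp C (\<eta> Y) a = Cmp C (\<eta> Y) b" using unit_natural[OF a] unit_natural[OF b] eq by simp
    then show "a = b" using is_iso_cancel_left[OF cat_C unit_Y iso[rule_format, OF Y] a b] by simp
  qed
  show "L1 ` hom C X Y = hom D (L0 X) (L0 Y)"
  proof
    show "L1 ` hom C X Y \<subseteq> hom D (L0 X) (L0 Y)" using functor_hom[OF left_functor] by blast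
    show "hom D (L0 X) (L0 Y) \<subseteq> L1 ` hom C X Y"
    proof
      fix f assume f: "f \<in> hom D (L0 X) (L0 Y)"
      have f_transpose: "Cmp C (G1 f) (\<eta> X) \<in> hom C X (G0 (L0 Y))" using transpose_hom[OF X f] .
      define h where "h = Cmp C r (Cmp C (G1 f) (\<eta> X))"
      have h: "h \<in> hom C X Y" using cmp_hom[OF cat_C f_transpose r(1)] by (simp add: h_def)
      have "Cmp C (G1 (L1 h)) (\<eta> X) = Cmp C (Cmp C (\<eta> Y) r) (Cmp C (G1 f) (\<eta> X))"
        using unit_natural[OF h] cmp_assoc_hom[OF cat_C f_transpose r(1) unit_Y] by (simp add: h_def)
      also have "\<dots> = Cmp C (G1 f) (\<eta> X)" using r(2) id_left_hom[OF cat_C f_transpose] by simp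
      finally have "L1 h = f" using transpose_inj[OF X functor_hom[OF left_functor h] f] by simp
      then show "f \<in> L1 ` hom C X Y" using h by blast
    qed
  qed
qed

lemma left_fully_faithful_iff_unit_iso:
  "fully_faithful C D L0 L1 \<longleftrightarrow> (\<forall>X\<in>Obj C. is_iso C (\<eta> X))"
  using unit_iso_if_left_fully_faithful left_fully_faithful_if_unit_iso by blast

definition counit :: "'c \<Rightarrow> 'd" where
  "counit Y = (SOME e. e \<in> hom D (L0 (G0 Y)) Y \<and> Cmp C (G1 e) (\<eta> (G0 Y)) = Idm C (G0 Y))"

lemma counit_spec:
  assumes Y: "Y \<in> Obj D"
  shows counit_hom: "counit Y \<in> hom D (L0 (G0 Y)) Y"
    and counit_transpose: "Cmp C (G1 (counit Y)) (\<eta> (G0 Y)) = Idm C (G0 Y)"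
proof -
  have GY: "G0 Y \<in> Obj C" using functor_obj[OF right_functor Y] .
  have "\<exists>e. e \<in> hom D (L0 (G0 Y)) Y \<and> Cmp C (G1 e) (\<eta> (G0 Y)) = Idm C (G0 Y)"
    using transpose_exists[OF GY Y id_hom[OF cat_C GY]] .
  from someI_ex[OF this] show "counit Y \<in> hom D (L0 (G0 Y)) Y"
    and "Cmp C (G1 (counit Y)) (\<eta> (G0 Y)) = Idm C (G0 Y)"
    unfolding counit_def by blast+
qed

lemma transpose_counit_cmp:
  assumes Y: "Y \<in> Obj D" and a: "a \<in> hom C U (G0 Y)"
  shows "Cmp C (G1 (Cmp D (counit Y) (L1 a))) (\<eta> U) = a"
proof -
  have U: "U \<in> Obj C" using hom_objs[OF cat_C a] by simp
  have "Cmp C (G1 (Cmp D (counit Y) (L1 a))) (\<eta> U)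
      = Cmp C (Cmp C (G1 (counit Y)) (\<eta> (G0 Y))) a"
    using transpose_cmp_right[OF a counit_hom[OF Y]] by simp
  also have "\<dots> = a" using counit_transpose[OF Y] id_left_hom[OF cat_C a] by simp
  finally show ?thesis .
qed

lemma counit_cmp_transpose:
  assumes U: "U \<in> Obj C" and c: "c \<in> hom D (L0 U) Y"
  shows "Cmp D (counit Y) (L1 (Cmp C (G1 c) (\<eta> U))) = c"
proof -
  have Y: "Y \<in> Obj D" using hom_objs[OF cat_D c] by simp
  have c_transpose: "Cmp C (G1 c) (\<eta> U) \<in> hom C U (G0 Y)" using transpose_hom[OF U c] .
  show ?thesis
    using transpose_inj[OF U cmp_hom[OF cat_D functor_hom[OF left_functor c_transpose] counit_hom[OF Y]] c]
      transpose_counit_cmp[OF Y c_transpose]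
    by simp
qed

lemma right_adjoint_cmp_counit:
  assumes X: "X \<in> Obj D" and u: "u \<in> hom D X Y"
  shows "Cmp C (G1 (Cmp D u (counit X))) (\<eta> (G0 X)) = G1 u"
  using transpose_cmp_left[OF functor_obj[OF right_functor X] counit_hom[OF X] u]
    counit_transpose[OF X] id_right_hom[OF cat_C functor_hom[OF right_functor u]]
  by simp

lemma counit_iso_if_right_fully_faithful:
  assumes ff: "fully_faithful D C G0 G1" and Y: "Y \<in> Obj D"
  shows "is_iso D (counit Y)"
proof -
  have GY: "G0 Y \<in> Obj C" using functor_obj[OF right_functor Y] .
  have LGY: "L0 (G0 Y) \<in> Obj D" using functor_obj[OF left_functor GY] .
  have counit_Y: "counit Y \<in> hom D (L0 (G0 Y)) Y" using counit_hom[OF Y] .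
  have unit_GY: "\<eta> (G0 Y) \<in> hom C (G0 Y) (G0 (L0 (G0 Y)))" using unit_hom[OF GY] .
  obtain s where s: "s \<in> hom D Y (L0 (G0 Y))" "G1 s = \<eta> (G0 Y)"
    using fully_faithful_full[OF ff Y LGY unit_GY] by blast
  have "G1 (Cmp D (counit Y) s) = G1 (Idm D Y)"
    using functor_cmp_hom[OF right_functor s(1) counit_Y] s(2) counit_transpose[OF Y]
      functor_id[OF right_functor Y]
    by simp
  then have right_inverse: "Cmp D (counit Y) s = Idm D Y"
    using fully_faithful_faithful[OF ff Y Y cmp_hom[OF cat_D s(1) counit_Y] id_hom[OF cat_D Y]] by simp
  have "Cmp C (G1 (Cmp D s (counit Y))) (\<eta> (G0 Y)) = Cmp C (G1 (Idm D (L0 (G0 Y)))) (\<eta> (G0 Y))"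
    using right_adjoint_cmp_counit[OF Y s(1)] s(2) functor_id[OF right_functor LGY]
      id_left_hom[OF cat_C unit_GY]
    by simp
  then have "Cmp D s (counit Y) = Idm D (L0 (G0 Y))"
    using transpose_inj[OF GY cmp_hom[OF cat_D counit_Y s(1)] id_hom[OF cat_D LGY]] by simp
  then show ?thesis using is_isoI[OF counit_Y s(1) _ right_inverse] by simp
qed

lemma right_fully_faithful_if_counit_iso:
  assumes iso: "\<forall>Y\<in>Obj D. is_iso D (counit Y)"
  shows "fully_faithful D C G0 G1"
  unfolding fully_faithful_def bij_betw_def
proof (intro ballI conjI)
  fix X Y assume X: "X \<in> Obj D" and Y: "Y \<in> Obj D"
  have GX: "G0 X \<in> Obj C" using functor_obj[OF right_functor X] .
  have counit_X: "counit X \<in> hom D (L0 (G0 X)) X" using counit_hom[OF X] .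
  obtain s where s: "s \<in> hom D X (L0 (G0 X))" "Cmp D (counit X) s = Idm D X"
    "Cmp D s (counit X) = Idm D (L0 (G0 X))"
    using is_isoE[OF iso[rule_format, OF X] counit_X] by blast
  show "inj_on G1 (hom D X Y)"
  proof (rule inj_onI)
    fix a b assume a: "a \<in> hom D X Y" and b: "b \<in> hom D X Y" and eq: "G1 a = G1 b"
    have "Cmp D a (counit X) = Cmp D b (counit X)"
      using transpose_inj[OF GX cmp_hom[OF cat_D counit_X a] cmp_hom[OF cat_D counit_X b]]
        right_adjoint_cmp_counit[OF X a] right_adjoint_cmp_counit[OF X b] eq
      by simp
    then show "a = b" using is_iso_cancel_right[OF cat_D counit_X iso[rule_format, OF X] a b] by simp
  qed
  show "G1 ` hom D X Y = hom C (G0 X) (G0 Y)"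
  proof
    show "G1 ` hom D X Y \<subseteq> hom C (G0 X) (G0 Y)" using functor_hom[OF right_functor] by blast
    show "hom C (G0 X) (G0 Y) \<subseteq> G1 ` hom D X Y"
    proof
      fix w assume w: "w \<in> hom C (G0 X) (G0 Y)"
      obtain c where c: "c \<in> hom D (L0 (G0 X)) Y" "Cmp C (G1 c) (\<eta> (G0 X)) = w"
        using transpose_exists[OF GX Y w] by blast
      have u: "Cmp D c s \<in> hom D X Y" using cmp_hom[OF cat_D s(1) c(1)] .
      have "Cmp D (Cmp D c s) (counit X) = c"
        using cmp_assoc_hom[OF cat_D counit_X s(1) c(1)] s(3) id_right_hom[OF cat_D c(1)] by simp
      then have "G1 (Cmp D c s) = w" using right_adjoint_cmp_counit[OF X u] c(2) by simp
      then show "w \<in> G1 ` hom D X Y" using u by blast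
    qed
  qed
qed

lemma right_fully_faithful_iff_counit_iso:
  "fully_faithful D C G0 G1 \<longleftrightarrow> (\<forall>Y\<in>Obj D. is_iso D (counit Y))"
  using counit_iso_if_right_fully_faithful right_fully_faithful_if_counit_iso by blast

end

section \<open>Adjoint triples\<close>

locale adjoint_triple = left: adjoint B A L0 L1 F0 F1 \<eta> + right: adjoint A B F0 F1 R0 R1 \<theta>
  for A :: "('a, 'b) cat" and B :: "('c, 'd) cat"
    and L0 :: "'c \<Rightarrow> 'a" and L1 :: "'d \<Rightarrow> 'b" and F0 :: "'a \<Rightarrow> 'c" and F1 :: "'b \<Rightarrow> 'd"
    and R0 :: "'c \<Rightarrow> 'a" and R1 :: "'d \<Rightarrow> 'b" and \<eta> :: "'c \<Rightarrow> 'd" and \<theta> :: "'a \<Rightarrow> 'b"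
begin

abbreviation \<epsilon> :: "'c \<Rightarrow> 'd" where "\<epsilon> \<equiv> right.counit"

lemma counit_mono_if_unit_iso:
  assumes iso: "\<forall>X\<in>Obj B. is_iso B (\<eta> X)" and Y: "Y \<in> Obj B"
    and a: "a \<in> hom B W (F0 (R0 Y))" and b: "b \<in> hom B W (F0 (R0 Y))"
    and eq: "Cmp B (\<epsilon> Y) a = Cmp B (\<epsilon> Y) b"
  shows "a = b"
proof -
  have W: "W \<in> Obj B" using hom_objs[OF left.cat_C a] by simp
  have RY: "R0 Y \<in> Obj A" using functor_obj[OF right.right_functor Y] .
  have counit_Y: "\<epsilon> Y \<in> hom B (F0 (R0 Y)) Y" using right.counit_hom[OF Y] .
  have unit_W: "\<eta> W \<in> hom B W (F0 (L0 W))" using left.unit_hom[OF W] .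
  obtain a' where a': "a' \<in> hom A (L0 W) (R0 Y)" "Cmp B (F1 a') (\<eta> W) = a"
    using left.transpose_exists[OF W RY a] by blast
  obtain b' where b': "b' \<in> hom A (L0 W) (R0 Y)" "Cmp B (F1 b') (\<eta> W) = b"
    using left.transpose_exists[OF W RY b] by blast
  have Fa': "F1 a' \<in> hom B (F0 (L0 W)) (F0 (R0 Y))" and Fb': "F1 b' \<in> hom B (F0 (L0 W)) (F0 (R0 Y))"
    using functor_hom[OF left.right_functor a'(1)] functor_hom[OF left.right_functor b'(1)] .
  have "Cmp B (Cmp B (\<epsilon> Y) (F1 a')) (\<eta> W) = Cmp B (Cmp B (\<epsilon> Y) (F1 b')) (\<eta> W)"
    using cmp_assoc_hom[OF left.cat_C unit_W Fa' counit_Y] cmp_assoc_hom[OF left.cat_C unit_W Fb' counit_Y]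
      a'(2) b'(2) eq
    by simp
  then have "Cmp B (\<epsilon> Y) (F1 a') = Cmp B (\<epsilon> Y) (F1 b')"
    using is_iso_cancel_right[OF left.cat_C unit_W iso[rule_format, OF W]
        cmp_hom[OF left.cat_C Fa' counit_Y] cmp_hom[OF left.cat_C Fb' counit_Y]]
    by simp
  then have "a' = b'"
    using right.transpose_counit_cmp[OF Y a'(1)] right.transpose_counit_cmp[OF Y b'(1)] by metis
  then show ?thesis using a'(2) b'(2) by simp
qed

lemma counit_iso_if_unit_iso:
  assumes iso: "\<forall>X\<in>Obj B. is_iso B (\<eta> X)" and Y: "Y \<in> Obj B"
  shows "is_iso B (\<epsilon> Y)"
proof -
  have LY: "L0 Y \<in> Obj A" using functor_obj[OF left.left_functor Y] .
  have FRY: "F0 (R0 Y) \<in> Obj B"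
    using functor_obj[OF left.right_functor functor_obj[OF right.right_functor Y]] .
  have counit_Y: "\<epsilon> Y \<in> hom B (F0 (R0 Y)) Y" using right.counit_hom[OF Y] .
  have unit_Y: "\<eta> Y \<in> hom B Y (F0 (L0 Y))" using left.unit_hom[OF Y] .
  obtain r where r: "r \<in> hom B (F0 (L0 Y)) Y" "Cmp B r (\<eta> Y) = Idm B Y"
    using is_isoE[OF iso[rule_format, OF Y] unit_Y] by blast
  define a where "a = Cmp A (R1 r) (\<theta> (L0 Y))"
  have a: "a \<in> hom A (L0 Y) (R0 Y)" using right.transpose_hom[OF LY r(1)] by (simp add: a_def)
  have Fa: "F1 a \<in> hom B (F0 (L0 Y)) (F0 (R0 Y))" using functor_hom[OF left.right_functor a] .
  define s where "s = Cmp B (F1 a) (\<eta> Y)"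
  have s: "s \<in> hom B Y (F0 (R0 Y))" using left.transpose_hom[OF Y a] by (simp add: s_def)
  have right_inverse: "Cmp B (\<epsilon> Y) s = Idm B Y"
    using cmp_assoc_hom[OF left.cat_C unit_Y Fa counit_Y] right.counit_cmp_transpose[OF LY r(1)] r(2)
    by (simp add: s_def a_def)
  have "Cmp B (\<epsilon> Y) (Cmp B s (\<epsilon> Y)) = Cmp B (\<epsilon> Y) (Idm B (F0 (R0 Y)))"
    using cmp_assoc_hom[OF left.cat_C counit_Y s counit_Y] right_inverse
      id_left_hom[OF left.cat_C counit_Y] id_right_hom[OF left.cat_C counit_Y]
    by simp
  then have "Cmp B s (\<epsilon> Y) = Idm B (F0 (R0 Y))"
    using counit_mono_if_unit_iso[OF iso Y cmp_hom[OF left.cat_C counit_Y s] id_hom[OF left.cat_C FRY]]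
    by simp
  then show ?thesis using is_isoI[OF counit_Y s _ right_inverse] by simp
qed

lemma unit_epi_if_counit_iso:
  assumes iso: "\<forall>Y\<in>Obj B. is_iso B (\<epsilon> Y)" and X: "X \<in> Obj B"
    and b1: "b1 \<in> hom B (F0 (L0 X)) Y" and b2: "b2 \<in> hom B (F0 (L0 X)) Y"
    and eq: "Cmp B b1 (\<eta> X) = Cmp B b2 (\<eta> X)"
  shows "b1 = b2"
proof -
  have Y: "Y \<in> Obj B" using hom_objs[OF left.cat_C b1] by simp
  have LX: "L0 X \<in> Obj A" using functor_obj[OF left.left_functor X] .
  have counit_Y: "\<epsilon> Y \<in> hom B (F0 (R0 Y)) Y" using right.counit_hom[OF Y] .
  have unit_X: "\<eta> X \<in> hom B X (F0 (L0 X))" using left.unit_hom[OF X] .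
  define b1' where "b1' = Cmp A (R1 b1) (\<theta> (L0 X))"
  define b2' where "b2' = Cmp A (R1 b2) (\<theta> (L0 X))"
  have b1': "b1' \<in> hom A (L0 X) (R0 Y)" and b2': "b2' \<in> hom A (L0 X) (R0 Y)"
    using right.transpose_hom[OF LX b1] right.transpose_hom[OF LX b2] by (simp_all add: b1'_def b2'_def)
  have c1: "Cmp B (\<epsilon> Y) (F1 b1') = b1" and c2: "Cmp B (\<epsilon> Y) (F1 b2') = b2"
    using right.counit_cmp_transpose[OF LX b1] right.counit_cmp_transpose[OF LX b2]
    by (simp_all add: b1'_def b2'_def)
  have "Cmp B (\<epsilon> Y) (Cmp B (F1 b1') (\<eta> X)) = Cmp B (\<epsilon> Y) (Cmp B (F1 b2') (\<eta> X))"
    using cmp_assoc_hom[OF left.cat_C unit_X functor_hom[OF left.right_functor b1'] counit_Y]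
      cmp_assoc_hom[OF left.cat_C unit_X functor_hom[OF left.right_functor b2'] counit_Y] c1 c2 eq
    by simp
  then have "Cmp B (F1 b1') (\<eta> X) = Cmp B (F1 b2') (\<eta> X)"
    using is_iso_cancel_left[OF left.cat_C counit_Y iso[rule_format, OF Y]
        left.transpose_hom[OF X b1'] left.transpose_hom[OF X b2']]
    by simp
  then have "b1' = b2'" using left.transpose_inj[OF X b1' b2'] by simp
  then show ?thesis using c1 c2 by simp
qed

lemma unit_iso_if_counit_iso:
  assumes iso: "\<forall>Y\<in>Obj B. is_iso B (\<epsilon> Y)" and X: "X \<in> Obj B"
  shows "is_iso B (\<eta> X)"
proof -
  have RX: "R0 X \<in> Obj A" using functor_obj[OF right.right_functor X] .
  have FLX: "F0 (L0 X) \<in> Obj B"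
    using functor_obj[OF left.right_functor functor_obj[OF left.left_functor X]] .
  have counit_X: "\<epsilon> X \<in> hom B (F0 (R0 X)) X" using right.counit_hom[OF X] .
  have unit_X: "\<eta> X \<in> hom B X (F0 (L0 X))" using left.unit_hom[OF X] .
  obtain s where s: "s \<in> hom B X (F0 (R0 X))" "Cmp B (\<epsilon> X) s = Idm B X"
    using is_isoE[OF iso[rule_format, OF X] counit_X] by blast
  obtain d where d: "d \<in> hom A (L0 X) (R0 X)" "Cmp B (F1 d) (\<eta> X) = s"
    using left.transpose_exists[OF X RX s(1)] by blast
  have Fd: "F1 d \<in> hom B (F0 (L0 X)) (F0 (R0 X))" using functor_hom[OF left.right_functor d(1)] .
  define r where "r = Cmp B (\<epsilon> X) (F1 d)"
  have r: "r \<in> hom B (F0 (L0 X)) X" using cmp_hom[OF left.cat_C Fd counit_X] by (simp add: r_def)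
  have left_inverse: "Cmp B r (\<eta> X) = Idm B X"
    using cmp_assoc_hom[OF left.cat_C unit_X Fd counit_X] d(2) s(2) by (simp add: r_def)
  have "Cmp B (Cmp B (\<eta> X) r) (\<eta> X) = Cmp B (Idm B (F0 (L0 X))) (\<eta> X)"
    using cmp_assoc_hom[OF left.cat_C unit_X r unit_X] left_inverse
      id_left_hom[OF left.cat_C unit_X] id_right_hom[OF left.cat_C unit_X]
    by simp
  then have "Cmp B (\<eta> X) r = Idm B (F0 (L0 X))"
    using unit_epi_if_counit_iso[OF iso X cmp_hom[OF left.cat_C r unit_X] id_hom[OF left.cat_C FLX]]
    by simp
  then show ?thesis using is_isoI[OF unit_X r left_inverse] by simp
qed

lemma left_fully_faithful_iff_right_fully_faithful:
  "fully_faithful B A L0 L1 \<longleftrightarrow> fully_faithful B A R0 R1"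
  using left.left_fully_faithful_iff_unit_iso right.right_fully_faithful_iff_counit_iso
    counit_iso_if_unit_iso unit_iso_if_counit_iso
  by blast

end

lemma abelianD:
  assumes "abelian C"
  shows "category C" and "\<exists>Z. zero_object C Z"
    and "\<And>f. f \<in> Arr C \<Longrightarrow> \<exists>k. is_kernel C f k"
    and "\<And>f. f \<in> Arr C \<Longrightarrow> \<exists>c. is_cokernel C f c"
  using assms unfolding abelian_def by blast+

theorem corollary4p3:
  fixes A :: "('a, 'b) cat" and B :: "('c, 'd) cat"
    and F0 :: "'a \<Rightarrow> 'c" and F1 :: "'b \<Rightarrow> 'd"
    and L0 :: "'c \<Rightarrow> 'a" and L1 :: "'d \<Rightarrow> 'b"
    and R0 :: "'c \<Rightarrow> 'a" and R1 :: "'d \<Rightarrow> 'b"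
  assumes "abelian A" and "abelian B"
    and "adjunction B A L0 L1 F0 F1"
    and "adjunction A B F0 F1 R0 R1"
  shows "(fully_faithful A B F0 F1 \<longrightarrow>
            (\<forall>M\<in>Obj A. \<forall>N\<in>Obj A.
               (strongly_rickart A M N \<longleftrightarrow> strongly_rickart B (F0 M) (F0 N)) \<and>
               (dual_strongly_rickart A M N \<longleftrightarrow> dual_strongly_rickart B (F0 M) (F0 N)))) \<and>
         (fully_faithful B A L0 L1 \<or> fully_faithful B A R0 R1 \<longrightarrow>
            (\<forall>M\<in>Obj B. \<forall>N\<in>Obj B.
               (strongly_rickart B M N \<longleftrightarrow> strongly_rickart A (R0 M) (R0 N)) \<and>
               (dual_strongly_rickart B M N \<longleftrightarrow> dual_strongly_rickart A (L0 M) (L0 N))))"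
proof -
  note A = abelianD[OF assms(1)] and B = abelianD[OF assms(2)]
  obtain ZA ZB where ZA: "zero_object A ZA" and ZB: "zero_object B ZB" using A(2) B(2) by blast
  obtain \<eta> where left: "adjoint B A L0 L1 F0 F1 \<eta>"
    using adjunction_adjoint[OF B(1) A(1) assms(3)] .
  obtain \<theta> where right: "adjoint A B F0 F1 R0 R1 \<theta>"
    using adjunction_adjoint[OF A(1) B(1) assms(4)] .
  interpret adjoint_triple A B L0 L1 F0 F1 R0 R1 \<eta> \<theta>
    using left right by (rule adjoint_triple.intro)
  show ?thesis
    using strongly_rickart_iff_fully_faithful_image[OF A(1) B(1) left.right_functor _ A(3)
        left.right_adjoint_preserves_kernel[OF ZB ZA]]
      dual_strongly_rickart_iff_fully_faithful_image[OF A(1) B(1) left.right_functor _ A(4)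
        right.left_adjoint_preserves_cokernel[OF ZA ZB]]
      strongly_rickart_iff_fully_faithful_image[OF B(1) A(1) right.right_functor _ B(3)
        right.right_adjoint_preserves_kernel[OF ZA ZB]]
      dual_strongly_rickart_iff_fully_faithful_image[OF B(1) A(1) left.left_functor _ B(4)
        left.left_adjoint_preserves_cokernel[OF ZB ZA]]
      left_fully_faithful_iff_right_fully_faithful
    by blast
qed

end
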